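(* Let $r_0>0$ and let $s>\sqrt{2}$ be arbitrary. Consider the stationary closed Nambu–Goto string in the five-dimensional Schwarzschild spacetime given by the embedding $$t=\frac{s r_0\,\tau}{\sqrt{2}},\quad r=s r_0,\quad \theta=\frac{\pi}{4},\quad \phi=\sigma,\quad \psi=\sigma+\tau,\qquad \tau\in\mathbb{R},\ \sigma\in\mathbb{R}/2\pi\mathbb{Z}.$$ Then this string is unstable under linear perturbations: there exist an integer $k$, a complex number $\omega$ with $\operatorname{Im}\omega>0$, and a nonzero constant vector $(c^1,c^2,c^3)\in\mathbb{C}^3$ such that $f^A(\tau,\sigma)=c^A e^{-i\omega\tau+ik\sigma}$ solves the linearized Nambu–Goto equation about this string.
   Context: The five-dimensional Schwarzschild spacetime with horizon radius $r_0>0$ has metric $$g=-\Big(1-\frac{r_0^2}{r^2}\Big)dt^2+\Big(1-\frac{r_0^2}{r^2}\Big)^{-1}dr^2+r^2\big[d\theta^2+\sin^2\theta\,d\phi^2+\cos^2\theta\,d\psi^2\big],$$ with $\theta\in(0,\pi/2)$ and $\phi,\psi\in\mathbb{R}/2\pi\mathbb{Z}$; units with speed of light $1$, signature $(-,+,+,+,+)$. A Nambu–Goto string is a timelike embedding $X^\mu(\xi^a)$ of a 2-dimensional worldsheet $N$ (coordinates $\xi^a=(\tau,\sigma)$) extremizing the area $-T\int d^2\xi\sqrt{|\det G|}$, where $G_{ab}=g_{\mu\nu}\partial_aX^\mu\partial_bX^\nu$ is the induced metric with Levi-Civita connection $D_a$; the equation of motion is $K^\mu{}_{ab}G^{ab}=0$,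 where $K^\mu{}_{ab}=D_aD_bX^\mu+\Gamma^\mu_{\nu\lambda}\partial_aX^\nu\partial_bX^\lambda$ is the second fundamental form (the given embedding satisfies it for every $s>\sqrt2$). Linear perturbations: choose an orthonormal frame $n_A{}^\mu$ ($A=1,2,3$) of the normal bundle of $N$ ($g_{\mu\nu}n_A{}^\mu\partial_aX^\nu=0$, $g_{\mu\nu}n_A{}^\mu n_B{}^\nu=\delta_{AB}$; e.g. $n_1=\frac{\sqrt{s^2-1}}{s}\partial_r$, $n_2=\frac{1}{sr_0}\partial_\theta$, $n_3=\frac{s^2}{\sqrt{(s^2-2)(s^2-1)}}\partial_t-\frac{\sqrt{2(s^2-1)}}{sr_0\sqrt{s^2-2}}(\partial_\phi-\partial_\psi)$), and write a normal perturbation as $\delta X^\mu=f^An_A{}^\mu$ with functions $f^A$ on $N$. Define $K_{Aab}=g_{\mu\nu}n_A{}^\mu K^\nu{}_{ab}$, the normal connection $\mu_{ABa}=g_{\mu\nu}n_A{}^\mu\partial_a n_B{}^\nu+\Gamma_{\alpha\beta\gamma}n_A{}^\alpha n_B{}^\beta\partial_aX^\gamma$ (antisymmetric in $A,B$), and $\mathscr{D}_af^B=D_af^B-\mu_A{}^B{}_af^A$, with frame indices raised/lowered by $\delta_{AB}$ and worldsheet indices by $G_{ab}$. The linearized Nambu–Goto equation is $$\mathscr{D}_a\mathscr{D}^af^B+\Big(K_A{}^{ab}K^B{}_{ab}+R_{\alpha\beta}n_A{}^\alpha n^{B\beta}-R_{\alpha\beta\gamma\delta}n_A{}^\alpha n_C{}^\beta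 n^{B\gamma}n^{C\delta}\Big)f^A=0,$$ where $R^\mu{}_{\nu\lambda\rho}=\Gamma^\mu_{\nu\rho,\lambda}-\Gamma^\mu_{\nu\lambda,\rho}+\Gamma^\mu_{\lambda\delta}\Gamma^\delta_{\nu\rho}-\Gamma^\mu_{\rho\delta}\Gamma^\delta_{\nu\lambda}$ and $R_{\nu\rho}=R^\mu{}_{\nu\mu\rho}$ are the spacetime Riemann and Ricci tensors. A mode $f^A\propto e^{-i\omega\tau+ik\sigma}$ with $\operatorname{Im}\omega>0$ grows exponentially in $\tau$; the string is called unstable if such a mode solution exists. *)

theory Defs
  imports "HOL-Analysis.Analysis"
begin

text \<open>Spacetime indices 0..4 = (t, r, theta, phi, psi); worldsheet indices 0..1 = (tau, sigma);
normal frame indices A = 1..3.\<close>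

definition pd :: "((nat \<Rightarrow> real) \<Rightarrow> 'b::real_normed_vector) \<Rightarrow> (nat \<Rightarrow> real) \<Rightarrow> nat \<Rightarrow> 'b" where
  "pd F x l = vector_derivative (\<lambda>h. F (x(l := h))) (at (x l))"

definition schw_g :: "real \<Rightarrow> (nat \<Rightarrow> real) \<Rightarrow> nat \<Rightarrow> nat \<Rightarrow> real" where
  "schw_g r0 x m n =
     (if m \<noteq> n then 0
      else if m = 0 then - (1 - r0^2 / (x 1)^2)
      else if m = 1 then 1 / (1 - r0^2 / (x 1)^2)
      else if m = 2 then (x 1)^2
      else if m = 3 then (x 1)^2 * (sin (x 2))^2
      else if m = 4 then (x 1)^2 * (cos (x 2))^2
      else 0)"

definition schw_gi :: "real \<Rightarrow> (nat \<Rightarrow> real) \<Rightarrow> nat \<Rightarrow> nat \<Rightarrow> real" where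
  "schw_gi r0 x m n = (if m = n \<and> m < 5 then 1 / schw_g r0 x m m else 0)"

type_synonym metric = "(nat \<Rightarrow> real) \<Rightarrow> nat \<Rightarrow> nat \<Rightarrow> real"

definition chr :: "metric \<Rightarrow> metric \<Rightarrow> (nat \<Rightarrow> real) \<Rightarrow> nat \<Rightarrow> nat \<Rightarrow> nat \<Rightarrow> real" where
  "chr g gi x m n l = (1/2) * (\<Sum>a<5. gi x m a *
      (pd (\<lambda>y. g y a l) x n + pd (\<lambda>y. g y a n) x l - pd (\<lambda>y. g y n l) x a))"

definition chr_low :: "metric \<Rightarrow> metric \<Rightarrow> (nat \<Rightarrow> real) \<Rightarrow> nat \<Rightarrow> nat \<Rightarrow> nat \<Rightarrow> real" where
  "chr_low g gi x a b c = (\<Sum>m<5. g x a m * chr g gi x m b c)"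

definition riem :: "metric \<Rightarrow> metric \<Rightarrow> (nat \<Rightarrow> real) \<Rightarrow> nat \<Rightarrow> nat \<Rightarrow> nat \<Rightarrow> nat \<Rightarrow> real" where
  "riem g gi x m n l r =
     pd (\<lambda>y. chr g gi y m n r) x l - pd (\<lambda>y. chr g gi y m n l) x r
     + (\<Sum>d<5. chr g gi x m l d * chr g gi x d n r)
     - (\<Sum>d<5. chr g gi x m r d * chr g gi x d n l)"

definition ricci :: "metric \<Rightarrow> metric \<Rightarrow> (nat \<Rightarrow> real) \<Rightarrow> nat \<Rightarrow> nat \<Rightarrow> real" where
  "ricci g gi x n r = (\<Sum>m<5. riem g gi x m n m r)"

definition riem_low :: "metric \<Rightarrow> metric \<Rightarrow> (nat \<Rightarrow> real) \<Rightarrow> nat \<Rightarrow> nat \<Rightarrow> nat \<Rightarrow> nat \<Rightarrow> real" where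
  "riem_low g gi x a b c d = (\<Sum>m<5. g x a m * riem g gi x m b c d)"

type_synonym embedding = "(nat \<Rightarrow> real) \<Rightarrow> (nat \<Rightarrow> real)"
type_synonym frame = "(nat \<Rightarrow> real) \<Rightarrow> nat \<Rightarrow> nat \<Rightarrow> real"

definition dX :: "embedding \<Rightarrow> (nat \<Rightarrow> real) \<Rightarrow> nat \<Rightarrow> nat \<Rightarrow> real" where
  "dX X xi a m = pd (\<lambda>eta. X eta m) xi a"

definition indG :: "metric \<Rightarrow> embedding \<Rightarrow> (nat \<Rightarrow> real) \<Rightarrow> nat \<Rightarrow> nat \<Rightarrow> real" where
  "indG g X xi a b = (\<Sum>m<5. \<Sum>n<5. g (X xi) m n * dX X xi a m * dX X xi b n)"

definition inv2 :: "(nat \<Rightarrow> nat \<Rightarrow> real) \<Rightarrow> nat \<Rightarrow> nat \<Rightarrow> real" where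
  "inv2 M a b =
     (let dt = M 0 0 * M 1 1 - M 0 1 * M 1 0 in
      if a = 0 \<and> b = 0 then M 1 1 / dt
      else if a = 1 \<and> b = 1 then M 0 0 / dt
      else if a = 0 \<and> b = 1 then - M 0 1 / dt
      else if a = 1 \<and> b = 0 then - M 1 0 / dt
      else 0)"

definition indGi :: "metric \<Rightarrow> embedding \<Rightarrow> (nat \<Rightarrow> real) \<Rightarrow> nat \<Rightarrow> nat \<Rightarrow> real" where
  "indGi g X xi = inv2 (indG g X xi)"

definition wchr :: "metric \<Rightarrow> embedding \<Rightarrow> (nat \<Rightarrow> real) \<Rightarrow> nat \<Rightarrow> nat \<Rightarrow> nat \<Rightarrow> real" where
  "wchr g X xi c a b = (1/2) * (\<Sum>d<2. indGi g X xi c d *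
      (pd (\<lambda>eta. indG g X eta d b) xi a + pd (\<lambda>eta. indG g X eta d a) xi b
       - pd (\<lambda>eta. indG g X eta a b) xi d))"

definition sff :: "metric \<Rightarrow> metric \<Rightarrow> embedding \<Rightarrow> (nat \<Rightarrow> real) \<Rightarrow> nat \<Rightarrow> nat \<Rightarrow> nat \<Rightarrow> real" where
  "sff g gi X xi m a b =
     pd (\<lambda>eta. dX X eta b m) xi a - (\<Sum>c<2. wchr g X xi c a b * dX X xi c m)
     + (\<Sum>n<5. \<Sum>l<5. chr g gi (X xi) m n l * dX X xi a n * dX X xi b l)"

definition KA :: "metric \<Rightarrow> metric \<Rightarrow> embedding \<Rightarrow> frame \<Rightarrow> (nat \<Rightarrow> real) \<Rightarrow> nat \<Rightarrow> nat \<Rightarrow> nat \<Rightarrow> real" where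
  "KA g gi X nf xi A a b = (\<Sum>m<5. \<Sum>n<5. g (X xi) m n * nf xi A m * sff g gi X xi n a b)"

definition nconn :: "metric \<Rightarrow> metric \<Rightarrow> embedding \<Rightarrow> frame \<Rightarrow> (nat \<Rightarrow> real) \<Rightarrow> nat \<Rightarrow> nat \<Rightarrow> nat \<Rightarrow> real" where
  "nconn g gi X nf xi A B a =
     (\<Sum>m<5. \<Sum>n<5. g (X xi) m n * nf xi A m * pd (\<lambda>eta. nf eta B n) xi a)
     + (\<Sum>p<5. \<Sum>q<5. \<Sum>r<5. chr_low g gi (X xi) p q r * nf xi A p * nf xi B q * dX X xi a r)"

type_synonym pert = "(nat \<Rightarrow> real) \<Rightarrow> nat \<Rightarrow> complex"

definition Dn :: "metric \<Rightarrow> metric \<Rightarrow> embedding \<Rightarrow> frame \<Rightarrow> pert \<Rightarrow> (nat \<Rightarrow> real) \<Rightarrow> nat \<Rightarrow> nat \<Rightarrow> complex" where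
  "Dn g gi X nf f xi a B =
     pd (\<lambda>eta. f eta B) xi a - (\<Sum>A\<in>{1..3}. complex_of_real (nconn g gi X nf xi A B a) * f xi A)"

definition DDn :: "metric \<Rightarrow> metric \<Rightarrow> embedding \<Rightarrow> frame \<Rightarrow> pert \<Rightarrow> (nat \<Rightarrow> real) \<Rightarrow> nat \<Rightarrow> nat \<Rightarrow> nat \<Rightarrow> complex" where
  "DDn g gi X nf f xi a b B =
     pd (\<lambda>eta. Dn g gi X nf f eta b B) xi a
     - (\<Sum>c<2. complex_of_real (wchr g X xi c a b) * Dn g gi X nf f xi c B)
     - (\<Sum>A\<in>{1..3}. complex_of_real (nconn g gi X nf xi A B a) * Dn g gi X nf f xi b A)"

definition boxn :: "metric \<Rightarrow> metric \<Rightarrow> embedding \<Rightarrow> frame \<Rightarrow> pert \<Rightarrow> (nat \<Rightarrow> real) \<Rightarrow> nat \<Rightarrow> complex" where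
  "boxn g gi X nf f xi B =
     (\<Sum>a<2. \<Sum>b<2. complex_of_real (indGi g X xi a b) * DDn g gi X nf f xi a b B)"

definition potn :: "metric \<Rightarrow> metric \<Rightarrow> embedding \<Rightarrow> frame \<Rightarrow> (nat \<Rightarrow> real) \<Rightarrow> nat \<Rightarrow> nat \<Rightarrow> real" where
  "potn g gi X nf xi A B =
     (\<Sum>a<2. \<Sum>b<2. \<Sum>c<2. \<Sum>d<2. indGi g X xi a c * indGi g X xi b d
         * KA g gi X nf xi A c d * KA g gi X nf xi B a b)
     + (\<Sum>p<5. \<Sum>q<5. ricci g gi (X xi) p q * nf xi A p * nf xi B q)
     - (\<Sum>C\<in>{1..3}. \<Sum>p<5. \<Sum>q<5. \<Sum>r<5. \<Sum>u<5.
         riem_low g gi (X xi) p q r u * nf xi A p * nf xi C q * nf xi B r * nf xi C u)"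

definition lin_NG_eq :: "metric \<Rightarrow> metric \<Rightarrow> embedding \<Rightarrow> frame \<Rightarrow> pert \<Rightarrow> bool" where
  "lin_NG_eq g gi X nf f \<longleftrightarrow>
     (\<forall>xi. \<forall>B\<in>{1..3}. boxn g gi X nf f xi B
        + (\<Sum>A\<in>{1..3}. complex_of_real (potn g gi X nf xi A B) * f xi A) = 0)"

definition string_emb :: "real \<Rightarrow> real \<Rightarrow> embedding" where
  "string_emb r0 s xi m =
     (if m = 0 then s * r0 * xi 0 / sqrt 2
      else if m = 1 then s * r0
      else if m = 2 then pi / 4
      else if m = 3 then xi 1
      else if m = 4 then xi 1 + xi 0
      else 0)"

definition string_frame :: "real \<Rightarrow> real \<Rightarrow> frame" where
  "string_frame r0 s xi A m =
     (if A = 1 \<and> m = 1 then sqrt (s^2 - 1) / s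
      else if A = 2 \<and> m = 2 then 1 / (s * r0)
      else if A = 3 \<and> m = 0 then s^2 / sqrt ((s^2 - 2) * (s^2 - 1))
      else if A = 3 \<and> m = 3 then - sqrt (2 * (s^2 - 1)) / (s * r0 * sqrt (s^2 - 2))
      else if A = 3 \<and> m = 4 then sqrt (2 * (s^2 - 1)) / (s * r0 * sqrt (s^2 - 2))
      else 0)"

end

theory Submission
  imports Defs
begin

(* The string sits at constant r = s r0 and theta = pi/4, so its induced metric, second
   fundamental form, normal connection and curvature potential are constant; they follow from
   the Christoffel symbols of the Schwarzschild metric and their first derivatives at that point.
   A plane wave c^A exp(-i omega tau + i k sigma) then turns the linearized equation into a
   3x3 linear system for c, which has a nonzero solution on a dispersion relation.
   For s^2 < 3 the k = 0 mode coupling the r- and t-directions has omega = i sqrt(3 - s^2) / s.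
   For s^2 >= 3 take k = 1 and omega = nu - 1/2: the dispersion relation becomes a real cubic
   with negative discriminant, and its root in the upper half plane gives Im omega > 0. *)

lemma pd_eqI: "((\<lambda>h. F (x(l := h))) has_vector_derivative D) (at (x l)) \<Longrightarrow> pd F x l = D"
  unfolding pd_def by (rule vector_derivative_at)

lemma pd_real_eqI: "((\<lambda>h. F (x(l := h))) has_real_derivative D) (at (x l)) \<Longrightarrow> pd F x l = (D::real)"
  by (rule pd_eqI) (simp add: has_real_derivative_iff_has_vector_derivative)

lemma pd_eq_0I: "(\<And>h. F (x(l := h)) = c) \<Longrightarrow> pd F x l = 0"
  unfolding pd_def by simp

lemma pd_const [simp]: "pd (\<lambda>_. c) x l = 0"
  by (rule pd_eq_0I) simp

lemma pd_affine: "(\<And>h. F (x(l := h)) = c + d * (h - x l)) \<Longrightarrow> pd F x l = (d::real)"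
  by (rule pd_real_eqI) (auto intro!: derivative_eq_intros)

lemma less_5_cases: "(m::nat) < 5 \<Longrightarrow> m = 0 \<or> m = 1 \<or> m = 2 \<or> m = 3 \<or> m = 4"
  by arith

lemma nat_5_cases: "(a::nat) = 0 \<or> a = 1 \<or> a = 2 \<or> a = 3 \<or> a = 4 \<or> a \<ge> 5"
  by arith

lemma sum_lessThan_5: "(\<Sum>a<5. f a) = f 0 + f 1 + f 2 + f 3 + f (4::nat)"
  by (simp add: eval_nat_numeral)

section \<open>The Schwarzschild metric in the chart\<close>

definition schw_f :: "real \<Rightarrow> real \<Rightarrow> real" where "schw_f r0 R = 1 - r0^2 / R^2"
definition schw_df :: "real \<Rightarrow> real \<Rightarrow> real" where "schw_df r0 R = 2 * r0^2 / R^3"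
definition schw_ddf :: "real \<Rightarrow> real \<Rightarrow> real" where "schw_ddf r0 R = - 6 * r0^2 / R^4"

lemma schw_f_deriv: "R \<noteq> 0 \<Longrightarrow> (schw_f r0 has_real_derivative schw_df r0 R) (at R)"
  unfolding schw_f_def schw_df_def
  by (auto intro!: derivative_eq_intros simp: field_simps eval_nat_numeral)

lemma schw_df_deriv: "R \<noteq> 0 \<Longrightarrow> (schw_df r0 has_real_derivative schw_ddf r0 R) (at R)"
  unfolding schw_ddf_def schw_df_def
  by (auto intro!: derivative_eq_intros simp: field_simps eval_nat_numeral)

lemma schw_f_nonzero: assumes "r0 > 0" "R > r0" shows "schw_f r0 R \<noteq> 0"
proof -
  have "r0 * r0 < R * R" using assms by (intro mult_strict_mono) auto
  thus ?thesis using assms by (simp add: schw_f_def field_simps power2_eq_square)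
qed

text \<open>Since \<open>g\<close> depends only on \<open>R = x 1\<close> and \<open>T = x 2\<close>, its derivatives up to second
  order are written out as explicit functions of \<open>(R, T)\<close>.\<close>

definition schw_comp :: "real \<Rightarrow> nat \<Rightarrow> nat \<Rightarrow> real \<Rightarrow> real \<Rightarrow> real" where
  "schw_comp r0 a b R T =
     (if a \<noteq> b then 0
      else if a = 0 then - schw_f r0 R
      else if a = 1 then 1 / schw_f r0 R
      else if a = 2 then R^2
      else if a = 3 then R^2 * (sin T)^2
      else if a = 4 then R^2 * (cos T)^2
      else 0)"

definition schw_comp_R :: "real \<Rightarrow> nat \<Rightarrow> nat \<Rightarrow> real \<Rightarrow> real \<Rightarrow> real" where
  "schw_comp_R r0 a b R T =
     (if a \<noteq> b then 0
      else if a = 0 then - schw_df r0 R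
      else if a = 1 then - schw_df r0 R / (schw_f r0 R * schw_f r0 R)
      else if a = 2 then 2 * R
      else if a = 3 then 2 * R * (sin T)^2
      else if a = 4 then 2 * R * (cos T)^2
      else 0)"

definition schw_comp_T :: "real \<Rightarrow> nat \<Rightarrow> nat \<Rightarrow> real \<Rightarrow> real \<Rightarrow> real" where
  "schw_comp_T r0 a b R T =
     (if a \<noteq> b then 0
      else if a = 3 then 2 * R^2 * sin T * cos T
      else if a = 4 then - 2 * R^2 * cos T * sin T
      else 0)"

definition schw_comp_RR :: "real \<Rightarrow> nat \<Rightarrow> nat \<Rightarrow> real \<Rightarrow> real \<Rightarrow> real" where
  "schw_comp_RR r0 a b R T =
     (if a \<noteq> b then 0
      else if a = 0 then - schw_ddf r0 R
      else if a = 1 then (2 * schw_df r0 R * schw_df r0 R - schw_ddf r0 R * schw_f r0 R) / (schw_f r0 R)^3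
      else if a = 2 then 2
      else if a = 3 then 2 * (sin T)^2
      else if a = 4 then 2 * (cos T)^2
      else 0)"

definition schw_comp_RT :: "real \<Rightarrow> nat \<Rightarrow> nat \<Rightarrow> real \<Rightarrow> real \<Rightarrow> real" where
  "schw_comp_RT r0 a b R T =
     (if a \<noteq> b then 0
      else if a = 3 then 4 * R * sin T * cos T
      else if a = 4 then - 4 * R * cos T * sin T
      else 0)"

definition schw_comp_TT :: "real \<Rightarrow> nat \<Rightarrow> nat \<Rightarrow> real \<Rightarrow> real \<Rightarrow> real" where
  "schw_comp_TT r0 a b R T =
     (if a \<noteq> b then 0
      else if a = 3 then 2 * R^2 * ((cos T)^2 - (sin T)^2)
      else if a = 4 then 2 * R^2 * ((sin T)^2 - (cos T)^2)
      else 0)"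

lemma schw_g_eq_comp: "schw_g r0 y a b = schw_comp r0 a b (y 1) (y 2)"
  by (simp add: schw_g_def schw_comp_def schw_f_def)

lemma schw_gi_eq_comp:
  "schw_gi r0 y a b = (if a = b \<and> a < 5 then 1 / schw_comp r0 a a (y 1) (y 2) else 0)"
  by (simp add: schw_gi_def schw_g_eq_comp)

context
  fixes r0 R T :: real
  assumes r0_pos: "r0 > 0" and outside: "R > r0"
begin

lemma R_nonzero: "R \<noteq> 0"
  using r0_pos outside by simp

lemmas schw_f_derivs = schw_f_deriv[OF R_nonzero] schw_df_deriv[OF R_nonzero]
  schw_f_nonzero[OF r0_pos outside]

lemma schw_comp_deriv_R: "((\<lambda>R. schw_comp r0 a b R T) has_real_derivative schw_comp_R r0 a b R T) (at R)"
proof (cases "a = b")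
  case False thus ?thesis by (simp add: schw_comp_def schw_comp_R_def)
next
  case True
  from nat_5_cases[of a] show ?thesis using True
    by (elim disjE) (auto simp: schw_comp_def schw_comp_R_def field_simps eval_nat_numeral
        intro!: derivative_eq_intros schw_f_derivs)
qed

lemma schw_comp_deriv_T: "((\<lambda>T. schw_comp r0 a b R T) has_real_derivative schw_comp_T r0 a b R T) (at T)"
proof (cases "a = b")
  case False thus ?thesis by (simp add: schw_comp_def schw_comp_T_def)
next
  case True
  from nat_5_cases[of a] show ?thesis using True
    by (elim disjE) (auto simp: schw_comp_def schw_comp_T_def field_simps eval_nat_numeral
        intro!: derivative_eq_intros schw_f_derivs)
qed

lemma schw_comp_R_deriv_R: "((\<lambda>R. schw_comp_R r0 a b R T) has_real_derivative schw_comp_RR r0 a b R T) (at R)"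
proof (cases "a = b")
  case False thus ?thesis by (simp add: schw_comp_R_def schw_comp_RR_def)
next
  case True
  from nat_5_cases[of a] show ?thesis using True
    by (elim disjE) (auto simp: schw_comp_R_def schw_comp_RR_def schw_f_derivs field_simps eval_nat_numeral
        intro!: derivative_eq_intros schw_f_derivs)
qed

lemma schw_comp_R_deriv_T: "((\<lambda>T. schw_comp_R r0 a b R T) has_real_derivative schw_comp_RT r0 a b R T) (at T)"
proof (cases "a = b")
  case False thus ?thesis by (simp add: schw_comp_R_def schw_comp_RT_def)
next
  case True
  from nat_5_cases[of a] show ?thesis using True
    by (elim disjE) (auto simp: schw_comp_R_def schw_comp_RT_def field_simps eval_nat_numeral
        intro!: derivative_eq_intros)
qed

lemma schw_comp_T_deriv_R: "((\<lambda>R. schw_comp_T r0 a b R T) has_real_derivative schw_comp_RT r0 a b R T) (at R)"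
proof (cases "a = b")
  case False thus ?thesis by (simp add: schw_comp_T_def schw_comp_RT_def)
next
  case True
  from nat_5_cases[of a] show ?thesis using True
    by (elim disjE) (auto simp: schw_comp_T_def schw_comp_RT_def field_simps eval_nat_numeral
        intro!: derivative_eq_intros)
qed

lemma schw_comp_T_deriv_T: "((\<lambda>T. schw_comp_T r0 a b R T) has_real_derivative schw_comp_TT r0 a b R T) (at T)"
proof (cases "a = b")
  case False thus ?thesis by (simp add: schw_comp_T_def schw_comp_TT_def)
next
  case True
  from nat_5_cases[of a] show ?thesis using True
    by (elim disjE) (auto simp: schw_comp_T_def schw_comp_TT_def field_simps eval_nat_numeral
        power2_eq_square intro!: derivative_eq_intros)
qed

lemma schw_comp_nonzero:
  assumes "m < 5" "sin T \<noteq> 0" "cos T \<noteq> 0" shows "schw_comp r0 m m R T \<noteq> 0"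
  using nat_5_cases[of m] assms R_nonzero schw_f_derivs(3) by (auto simp: schw_comp_def)

end

definition schw_icomp :: "real \<Rightarrow> nat \<Rightarrow> nat \<Rightarrow> real \<Rightarrow> real \<Rightarrow> real" where
  "schw_icomp r0 m a R T = (if m = a \<and> m < 5 then 1 / schw_comp r0 m m R T else 0)"

definition schw_icomp_R :: "real \<Rightarrow> nat \<Rightarrow> nat \<Rightarrow> real \<Rightarrow> real \<Rightarrow> real" where
  "schw_icomp_R r0 m a R T = (if m = a \<and> m < 5
     then - schw_comp_R r0 m m R T / (schw_comp r0 m m R T * schw_comp r0 m m R T) else 0)"

definition schw_icomp_T :: "real \<Rightarrow> nat \<Rightarrow> nat \<Rightarrow> real \<Rightarrow> real \<Rightarrow> real" where
  "schw_icomp_T r0 m a R T = (if m = a \<and> m < 5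
     then - schw_comp_T r0 m m R T / (schw_comp r0 m m R T * schw_comp r0 m m R T) else 0)"

definition schw_dcomp :: "real \<Rightarrow> nat \<Rightarrow> nat \<Rightarrow> nat \<Rightarrow> real \<Rightarrow> real \<Rightarrow> real" where
  "schw_dcomp r0 a b n R T =
     (if n = 1 then schw_comp_R r0 a b R T else if n = 2 then schw_comp_T r0 a b R T else 0)"

definition schw_dcomp_R :: "real \<Rightarrow> nat \<Rightarrow> nat \<Rightarrow> nat \<Rightarrow> real \<Rightarrow> real \<Rightarrow> real" where
  "schw_dcomp_R r0 a b n R T =
     (if n = 1 then schw_comp_RR r0 a b R T else if n = 2 then schw_comp_RT r0 a b R T else 0)"

definition schw_dcomp_T :: "real \<Rightarrow> nat \<Rightarrow> nat \<Rightarrow> nat \<Rightarrow> real \<Rightarrow> real \<Rightarrow> real" where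
  "schw_dcomp_T r0 a b n R T =
     (if n = 1 then schw_comp_RT r0 a b R T else if n = 2 then schw_comp_TT r0 a b R T else 0)"

definition schw_chr :: "real \<Rightarrow> nat \<Rightarrow> nat \<Rightarrow> nat \<Rightarrow> real \<Rightarrow> real \<Rightarrow> real" where
  "schw_chr r0 m n l R T = 1/2 * (\<Sum>a<5. schw_icomp r0 m a R T *
      (schw_dcomp r0 a l n R T + schw_dcomp r0 a n l R T - schw_dcomp r0 n l a R T))"

definition schw_chr_R :: "real \<Rightarrow> nat \<Rightarrow> nat \<Rightarrow> nat \<Rightarrow> real \<Rightarrow> real \<Rightarrow> real" where
  "schw_chr_R r0 m n l R T = 1/2 * (\<Sum>a<5. schw_icomp_R r0 m a R T *
      (schw_dcomp r0 a l n R T + schw_dcomp r0 a n l R T - schw_dcomp r0 n l a R T)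
      + (schw_dcomp_R r0 a l n R T + schw_dcomp_R r0 a n l R T - schw_dcomp_R r0 n l a R T)
        * schw_icomp r0 m a R T)"

definition schw_chr_T :: "real \<Rightarrow> nat \<Rightarrow> nat \<Rightarrow> nat \<Rightarrow> real \<Rightarrow> real \<Rightarrow> real" where
  "schw_chr_T r0 m n l R T = 1/2 * (\<Sum>a<5. schw_icomp_T r0 m a R T *
      (schw_dcomp r0 a l n R T + schw_dcomp r0 a n l R T - schw_dcomp r0 n l a R T)
      + (schw_dcomp_T r0 a l n R T + schw_dcomp_T r0 a n l R T - schw_dcomp_T r0 n l a R T)
        * schw_icomp r0 m a R T)"

context
  fixes r0 R T :: real
  assumes r0_pos: "r0 > 0" and outside: "R > r0"
    and sin_nonzero: "sin T \<noteq> 0" and cos_nonzero: "cos T \<noteq> 0"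
begin

lemma schw_icomp_deriv_R: "((\<lambda>R. schw_icomp r0 m a R T) has_real_derivative schw_icomp_R r0 m a R T) (at R)"
proof (cases "m = a \<and> m < 5")
  case True thus ?thesis
    using schw_comp_nonzero[OF r0_pos outside, of m T] sin_nonzero cos_nonzero
      schw_comp_deriv_R[OF r0_pos outside, of m m T]
    by (auto simp: schw_icomp_def schw_icomp_R_def intro!: derivative_eq_intros)
next
  case False
  hence "(\<lambda>R. schw_icomp r0 m a R T) = (\<lambda>_. 0)" "schw_icomp_R r0 m a R T = 0"
    by (auto simp: schw_icomp_def schw_icomp_R_def)
  thus ?thesis by simp
qed

lemma schw_icomp_deriv_T: "((\<lambda>T. schw_icomp r0 m a R T) has_real_derivative schw_icomp_T r0 m a R T) (at T)"
proof (cases "m = a \<and> m < 5")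
  case True thus ?thesis
    using schw_comp_nonzero[OF r0_pos outside, of m T] sin_nonzero cos_nonzero
      schw_comp_deriv_T[OF r0_pos outside, of m m T]
    by (auto simp: schw_icomp_def schw_icomp_T_def intro!: derivative_eq_intros)
next
  case False
  hence "(\<lambda>T. schw_icomp r0 m a R T) = (\<lambda>_. 0)" "schw_icomp_T r0 m a R T = 0"
    by (auto simp: schw_icomp_def schw_icomp_T_def)
  thus ?thesis by simp
qed

lemma schw_dcomp_deriv_R: "((\<lambda>R. schw_dcomp r0 a b n R T) has_real_derivative schw_dcomp_R r0 a b n R T) (at R)"
  using schw_comp_R_deriv_R[OF r0_pos outside] schw_comp_T_deriv_R[OF r0_pos outside]
  by (auto simp: schw_dcomp_def schw_dcomp_R_def)

lemma schw_dcomp_deriv_T: "((\<lambda>T. schw_dcomp r0 a b n R T) has_real_derivative schw_dcomp_T r0 a b n R T) (at T)"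
  using schw_comp_R_deriv_T[OF r0_pos outside] schw_comp_T_deriv_T[OF r0_pos outside]
  by (auto simp: schw_dcomp_def schw_dcomp_T_def)

lemma schw_chr_deriv_R: "((\<lambda>R. schw_chr r0 m n l R T) has_real_derivative schw_chr_R r0 m n l R T) (at R)"
  unfolding schw_chr_def schw_chr_R_def
  by (intro DERIV_cmult DERIV_sum DERIV_mult DERIV_add DERIV_diff schw_icomp_deriv_R schw_dcomp_deriv_R)

lemma schw_chr_deriv_T: "((\<lambda>T. schw_chr r0 m n l R T) has_real_derivative schw_chr_T r0 m n l R T) (at T)"
  unfolding schw_chr_def schw_chr_T_def
  by (intro DERIV_cmult DERIV_sum DERIV_mult DERIV_add DERIV_diff schw_icomp_deriv_T schw_dcomp_deriv_T)

end

lemma pd_schw_g: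
  assumes "r0 > 0" "y 1 > r0"
  shows "pd (\<lambda>y. schw_g r0 y a b) y n = schw_dcomp r0 a b n (y 1) (y 2)"
proof -
  consider "n = 1" | "n = 2" | "n \<noteq> 1 \<and> n \<noteq> 2" by blast
  thus ?thesis
  proof cases
    case 1
    show ?thesis unfolding 1 schw_dcomp_def
      by (rule pd_real_eqI)
        (use schw_comp_deriv_R[OF assms, of a b "y 2"] in \<open>simp add: schw_g_eq_comp\<close>)
  next
    case 2
    show ?thesis unfolding 2 schw_dcomp_def
      by (rule pd_real_eqI)
        (use schw_comp_deriv_T[OF assms, of a b "y 2"] in \<open>simp add: schw_g_eq_comp\<close>)
  next
    case 3
    thus ?thesis unfolding schw_dcomp_def
      by (simp add: pd_eq_0I[where c = "schw_comp r0 a b (y 1) (y 2)"] schw_g_eq_comp)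
  qed
qed

lemma chr_schw:
  assumes "r0 > 0" "y 1 > r0"
  shows "chr (schw_g r0) (schw_gi r0) y m n l = schw_chr r0 m n l (y 1) (y 2)"
  unfolding chr_def schw_chr_def using assms
  by (simp add: pd_schw_g schw_gi_eq_comp schw_icomp_def del: One_nat_def)

text \<open>The derivative in \<open>r\<close> is only taken on the open exterior region \<open>r > r\<^sub>0\<close>, where
  \<^const>\<open>chr\<close> and \<^const>\<open>schw_chr\<close> agree.\<close>

lemma pd_chr_schw:
  assumes "r0 > 0" "x 1 > r0" "sin (x 2) \<noteq> 0" "cos (x 2) \<noteq> 0"
  shows "pd (\<lambda>y. chr (schw_g r0) (schw_gi r0) y m n r) x l =
    (if l = 1 then schw_chr_R r0 m n r (x 1) (x 2)
     else if l = 2 then schw_chr_T r0 m n r (x 1) (x 2) else 0)"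
proof -
  consider "l = 1" | "l = 2" | "l \<noteq> 1 \<and> l \<noteq> 2" by blast
  thus ?thesis
  proof cases
    case 1
    have "((\<lambda>h. chr (schw_g r0) (schw_gi r0) (x(1 := h)) m n r)
          has_real_derivative schw_chr_R r0 m n r (x 1) (x 2)) (at (x 1))"
      by (rule has_field_derivative_transform_within_open[where S = "{r0<..}",
            OF schw_chr_deriv_R[OF assms]]) (use assms in \<open>auto simp: chr_schw\<close>)
    thus ?thesis unfolding 1 by (simp add: pd_real_eqI)
  next
    case 2
    have "((\<lambda>h. chr (schw_g r0) (schw_gi r0) (x(2 := h)) m n r)
          has_real_derivative schw_chr_T r0 m n r (x 1) (x 2)) (at (x 2))"
      using schw_chr_deriv_T[OF assms] assms by (simp add: chr_schw)
    thus ?thesis unfolding 2 by (simp add: pd_real_eqI)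
  next
    case 3
    thus ?thesis
      using assms by (simp add: pd_eq_0I[where c = "schw_chr r0 m n r (x 1) (x 2)"] chr_schw)
  qed
qed

definition schw_dchr :: "real \<Rightarrow> nat \<Rightarrow> nat \<Rightarrow> nat \<Rightarrow> nat \<Rightarrow> real \<Rightarrow> real \<Rightarrow> real" where
  "schw_dchr r0 l m n r R T =
     (if l = 1 then schw_chr_R r0 m n r R T else if l = 2 then schw_chr_T r0 m n r R T else 0)"

definition schw_riem :: "real \<Rightarrow> nat \<Rightarrow> nat \<Rightarrow> nat \<Rightarrow> nat \<Rightarrow> real \<Rightarrow> real \<Rightarrow> real" where
  "schw_riem r0 m n l r R T = schw_dchr r0 l m n r R T - schw_dchr r0 r m n l R T
     + (\<Sum>d<5. schw_chr r0 m l d R T * schw_chr r0 d n r R T)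
     - (\<Sum>d<5. schw_chr r0 m r d R T * schw_chr r0 d n l R T)"

lemma riem_schw:
  assumes "r0 > 0" "x 1 > r0" "sin (x 2) \<noteq> 0" "cos (x 2) \<noteq> 0"
  shows "riem (schw_g r0) (schw_gi r0) x m n l r = schw_riem r0 m n l r (x 1) (x 2)"
  unfolding riem_def schw_riem_def schw_dchr_def using assms
  by (simp add: pd_chr_schw chr_schw del: One_nat_def)

lemma sin_cos_pi_4:
  "sin (pi/4) * cos (pi/4) = 1/2" "cos (pi/4) * sin (pi/4) = 1/2"
  "(sin (pi/4))^2 = 1/2" "(cos (pi/4))^2 = 1/2"
  "cos (pi/4) * cos (pi/4) = 1/2" "sin (pi/4) * sin (pi/4) = 1/2"
  "cos (pi/4) * (cos (pi/4) * x) = x/2" "sin (pi/4) * (sin (pi/4) * x) = x/2"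
  by (simp_all add: sin_45 cos_45 power_divide)

lemma sin_cos_pi_4_nonzero: "sin (pi/4) \<noteq> 0" "cos (pi/4) \<noteq> 0"
  by (simp_all add: sin_45 cos_45)

text \<open>\<open>s\<^sup>2 - 1\<close> and \<open>s\<^sup>2 - 2\<close> are kept folded so that \<open>field_simps\<close> treats them as atoms.\<close>

definition w1 :: "real \<Rightarrow> real" where "w1 s = s^2 - 1"
definition w2 :: "real \<Rightarrow> real" where "w2 s = s^2 - 2"

text \<open>The suffix \<open>_str\<close> marks values at \<open>r = s r\<^sub>0\<close>, \<open>\<theta> = \<pi>/4\<close>, where the string lies.\<close>

definition chr_str :: "real \<Rightarrow> real \<Rightarrow> nat \<Rightarrow> nat \<Rightarrow> nat \<Rightarrow> real" where
  "chr_str s r0 m n l =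
    (if (m,n,l) = (0,0,1) \<or> (m,n,l) = (0,1,0) then 1/(s*r0*w1 s)
     else if (m,n,l) = (1,0,0) then w1 s/(s^5*r0)
     else if (m,n,l) = (1,1,1) then -1/(s*r0*w1 s)
     else if (m,n,l) = (1,2,2) then -r0*w1 s/s
     else if (m,n,l) = (1,3,3) \<or> (m,n,l) = (1,4,4) then -r0*w1 s/(2 * s)
     else if (m,n,l) = (2,1,2) \<or> (m,n,l) = (2,2,1) \<or> (m,n,l) = (3,1,3) \<or> (m,n,l) = (3,3,1)
          \<or> (m,n,l) = (4,1,4) \<or> (m,n,l) = (4,4,1) then 1/(s*r0)
     else if (m,n,l) = (2,3,3) then -1/2
     else if (m,n,l) = (2,4,4) then 1/2
     else if (m,n,l) = (3,2,3) \<or> (m,n,l) = (3,3,2) then 1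
     else if (m,n,l) = (4,2,4) \<or> (m,n,l) = (4,4,2) then -1
     else 0)"

definition chr_R_str :: "real \<Rightarrow> real \<Rightarrow> nat \<Rightarrow> nat \<Rightarrow> nat \<Rightarrow> real" where
  "chr_R_str s r0 m n l =
    (if (m,n,l) = (0,0,1) \<or> (m,n,l) = (0,1,0) then (-3 * w1 s - 2)/(s^2 * r0^2 * (w1 s)^2)
     else if (m,n,l) = (1,0,0) then (2 - 3 * w1 s)/(s^6 * r0^2)
     else if (m,n,l) = (1,1,1) then (3 * w1 s + 2)/(s^2 * r0^2 * (w1 s)^2)
     else if (m,n,l) = (1,2,2) then -(w1 s + 2)/s^2
     else if (m,n,l) = (1,3,3) \<or> (m,n,l) = (1,4,4) then -(w1 s + 2)/(2 * s^2)
     else if (m,n,l) = (2,1,2) \<or> (m,n,l) = (2,2,1) \<or> (m,n,l) = (3,1,3) \<or> (m,n,l) = (3,3,1)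
          \<or> (m,n,l) = (4,1,4) \<or> (m,n,l) = (4,4,1) then -1/(s^2 * r0^2)
     else 0)"

definition chr_T_str :: "real \<Rightarrow> real \<Rightarrow> nat \<Rightarrow> nat \<Rightarrow> nat \<Rightarrow> real" where
  "chr_T_str s r0 m n l =
    (if (m,n,l) = (1,3,3) then -r0 * w1 s/s
     else if (m,n,l) = (1,4,4) then r0 * w1 s/s
     else if (m,n,l) = (3,2,3) \<or> (m,n,l) = (3,3,2) \<or> (m,n,l) = (4,2,4) \<or> (m,n,l) = (4,4,2) then -2
     else 0)"

text \<open>On the string sphere \<open>R\<^sup>m\<^sub>n\<^sub>l\<^sub>r\<close> vanishes unless \<open>{l, r} = {m, n}\<close>, so it is determined by
  the sectional components \<open>riem_sec_str m n = R\<^sup>m\<^sub>n\<^sub>m\<^sub>n\<close>.\<close>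

definition riem_sec_str :: "real \<Rightarrow> real \<Rightarrow> nat \<Rightarrow> nat \<Rightarrow> real" where
  "riem_sec_str s r0 m n =
    (let D = s^2 * r0^2; S = s^2; w = w1 s in
     if (m,n) = (0,1) then 3/(D*w) else if (m,n) = (0,2) then -1/S
     else if (m,n) = (0,3) \<or> (m,n) = (0,4) then -1/(2*S)
     else if (m,n) = (1,0) then -3*w/(S*S*D) else if (m,n) = (1,2) then -1/S
     else if (m,n) = (1,3) \<or> (m,n) = (1,4) then -1/(2*S)
     else if (m,n) = (2,0) \<or> (m,n) = (3,0) \<or> (m,n) = (4,0) then w/(S*S*D)
     else if (m,n) = (2,1) \<or> (m,n) = (3,1) \<or> (m,n) = (4,1) then -1/(D*w)
     else if (m,n) = (3,2) \<or> (m,n) = (4,2) then 1/S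
     else if (m,n) = (2,3) \<or> (m,n) = (2,4) \<or> (m,n) = (3,4) \<or> (m,n) = (4,3) then 1/(2*S)
     else 0)"

definition riem_str :: "real \<Rightarrow> real \<Rightarrow> nat \<Rightarrow> nat \<Rightarrow> nat \<Rightarrow> nat \<Rightarrow> real" where
  "riem_str s r0 m n l r = (if m \<noteq> n \<and> l = m \<and> r = n then riem_sec_str s r0 m n
     else if m \<noteq> n \<and> l = n \<and> r = m then - riem_sec_str s r0 m n else 0)"

locale schw_exterior_point =
  fixes r0 s :: real
  assumes r0_pos: "r0 > 0" and s_gt_1: "s > 1"
begin

lemma s_nonzero: "s \<noteq> 0" and r0_nonzero: "r0 \<noteq> 0"
  using r0_pos s_gt_1 by auto

lemma outside: "s * r0 > r0"
  using r0_pos s_gt_1 by simp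

lemma w1_nonzero: "w1 s \<noteq> 0"
  using s_gt_1 unfolding w1_def by (simp add: power2_eq_square) (smt (verit) mult_less_cancel_left1)

lemma schw_f_str: "schw_f r0 (s*r0) = w1 s/s^2"
  using r0_pos s_gt_1 by (simp add: schw_f_def w1_def field_simps power2_eq_square)

lemma schw_df_str: "schw_df r0 (s*r0) = 2/(s^3*r0)"
  using r0_pos s_gt_1 by (simp add: schw_df_def field_simps eval_nat_numeral)

lemma schw_ddf_str: "schw_ddf r0 (s*r0) = -6/(s^4*r0^2)"
  using r0_pos s_gt_1 by (simp add: schw_ddf_def field_simps eval_nat_numeral)

lemmas schw_str_simps = schw_comp_def schw_comp_R_def schw_comp_T_def schw_comp_RR_def
  schw_comp_RT_def schw_comp_TT_def schw_f_str schw_df_str schw_ddf_str sin_cos_pi_4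

lemma schw_chr_str:
  assumes "m < 5" "n < 5" "l < 5"
  shows "schw_chr r0 m n l (s*r0) (pi/4) = chr_str s r0 m n l"
  using less_5_cases[OF assms(1)] less_5_cases[OF assms(2)] less_5_cases[OF assms(3)]
    r0_pos s_gt_1 w1_nonzero
  apply (elim disjE)
  apply (simp_all add: sum_lessThan_5 schw_chr_def chr_str_def schw_icomp_def schw_dcomp_def
      schw_str_simps)
  apply (simp_all add: field_simps)
  apply (simp_all add: algebra_simps eval_nat_numeral sin_cos_pi_4)
  done

lemma schw_chr_R_str:
  assumes "m < 5" "n < 5" "l < 5"
  shows "schw_chr_R r0 m n l (s*r0) (pi/4) = chr_R_str s r0 m n l"
  using less_5_cases[OF assms(1)] less_5_cases[OF assms(2)] less_5_cases[OF assms(3)]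
    r0_pos s_gt_1 w1_nonzero
  apply (elim disjE)
  apply (simp_all add: sum_lessThan_5 schw_chr_R_def chr_R_str_def schw_icomp_def schw_icomp_R_def
      schw_dcomp_def schw_dcomp_R_def schw_str_simps)
  apply (simp_all add: field_simps)
  apply (simp_all add: algebra_simps eval_nat_numeral sin_cos_pi_4)
  done

lemma schw_chr_T_str:
  assumes "m < 5" "n < 5" "l < 5"
  shows "schw_chr_T r0 m n l (s*r0) (pi/4) = chr_T_str s r0 m n l"
  using less_5_cases[OF assms(1)] less_5_cases[OF assms(2)] less_5_cases[OF assms(3)]
    r0_pos s_gt_1 w1_nonzero
  apply (elim disjE)
  apply (simp_all add: sum_lessThan_5 schw_chr_T_def chr_T_str_def schw_icomp_def schw_icomp_T_def
      schw_dcomp_def schw_dcomp_T_def schw_str_simps)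
  apply (simp_all add: field_simps)
  apply (simp_all add: algebra_simps eval_nat_numeral sin_cos_pi_4)
  done

lemma schw_riem_str:
  assumes "m < 5" "n < 5" "l < 5" "r < 5"
  shows "schw_riem r0 m n l r (s*r0) (pi/4) = riem_str s r0 m n l r"
  using less_5_cases[OF assms(1)] less_5_cases[OF assms(2)] less_5_cases[OF assms(3)]
    less_5_cases[OF assms(4)] r0_pos s_gt_1 w1_nonzero
  apply (elim disjE)
  apply (simp_all add: schw_riem_def schw_dchr_def sum_lessThan_5 schw_chr_str schw_chr_R_str
      schw_chr_T_str chr_str_def chr_R_str_def chr_T_str_def riem_str_def riem_sec_str_def Let_def)
  apply (simp_all add: field_simps)
  apply (simp_all add: algebra_simps eval_nat_numeral w1_def)
  done

end

section \<open>Geometry of the string\<close>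

definition dX_str :: "real \<Rightarrow> real \<Rightarrow> nat \<Rightarrow> nat \<Rightarrow> real" where
  "dX_str r0 s a m = (if a = 0 then (if m = 0 then s*r0/sqrt 2 else if m = 4 then 1 else 0)
     else if a = 1 then (if m = 3 \<or> m = 4 then 1 else 0) else 0)"

lemma string_emb_update:
  "string_emb r0 s (xi(a := h)) m = string_emb r0 s xi m + dX_str r0 s a m * (h - xi a)"
  by (cases "a = 0"; cases "a = 1") (auto simp: string_emb_def dX_str_def field_simps)

lemma dX_string: "dX (string_emb r0 s) xi a m = dX_str r0 s a m"
  unfolding dX_def by (rule pd_affine) (rule string_emb_update)

lemma string_emb_r: "string_emb r0 s xi 1 = s*r0" "string_emb r0 s xi (Suc 0) = s*r0"
  and string_emb_theta: "string_emb r0 s xi 2 = pi/4"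
  by (simp_all add: string_emb_def)

lemma pd_string_frame: "pd (\<lambda>eta. string_frame r0 s eta B n) xi a = 0"
  by (rule pd_eq_0I[where c = "string_frame r0 s xi B n"]) (simp add: string_frame_def)

definition G_str :: "real \<Rightarrow> real \<Rightarrow> nat \<Rightarrow> nat \<Rightarrow> real" where
  "G_str r0 s a b = (if a = 0 \<and> b = 0 then r0^2/2
     else if (a = 0 \<and> b = 1) \<or> (a = 1 \<and> b = 0) then s^2*r0^2/2
     else if a = 1 \<and> b = 1 then s^2*r0^2 else 0)"

definition kappa_str :: "real \<Rightarrow> real \<Rightarrow> real" where "kappa_str r0 s = 1/(r0^2 * s^2 * w2 s)"

definition Gi_str :: "real \<Rightarrow> real \<Rightarrow> nat \<Rightarrow> nat \<Rightarrow> real" where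
  "Gi_str r0 s a b = (if a = 0 \<and> b = 0 then -4 * s^2 * kappa_str r0 s
     else if (a = 0 \<and> b = 1) \<or> (a = 1 \<and> b = 0) then 2 * s^2 * kappa_str r0 s
     else if a = 1 \<and> b = 1 then -2 * kappa_str r0 s else 0)"

definition frame_str :: "real \<Rightarrow> real \<Rightarrow> nat \<Rightarrow> nat \<Rightarrow> real" where
  "frame_str r0 s A m =
     (if A = 1 \<and> m = 1 then sqrt (w1 s) / s
      else if A = 2 \<and> m = 2 then 1 / (s * r0)
      else if A = 3 \<and> m = 0 then s^2 / (sqrt (w2 s) * sqrt (w1 s))
      else if A = 3 \<and> m = 3 then - (sqrt 2 * sqrt (w1 s)) / (s * r0 * sqrt (w2 s))
      else if A = 3 \<and> m = 4 then (sqrt 2 * sqrt (w1 s)) / (s * r0 * sqrt (w2 s))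
      else 0)"

lemma string_frame_eq: "string_frame r0 s xi A m = frame_str r0 s A m"
proof -
  have "sqrt (2 * (s^2 - 1)) = sqrt 2 * sqrt (s^2 - 1)"
    "sqrt ((s^2 - 2) * (s^2 - 1)) = sqrt (s^2 - 2) * sqrt (s^2 - 1)"
    by (rule real_sqrt_mult)+
  thus ?thesis unfolding string_frame_def frame_str_def w1_def w2_def by presburger
qed

definition K_str :: "real \<Rightarrow> real \<Rightarrow> nat \<Rightarrow> nat \<Rightarrow> nat \<Rightarrow> real" where
  "K_str r0 s A a b =
    (if A = 1 then (if a = 0 \<and> b = 0 then - r0 * w1 s * sqrt (w1 s) / (2 * s^2)
                    else if a = 1 \<and> b = 1 then - r0 * sqrt (w1 s) else - r0 * sqrt (w1 s) / 2)
     else if A = 2 then (if a = 1 \<and> b = 1 then 0 else s * r0 / 2)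
     else 0)"

definition mu_alpha :: "real \<Rightarrow> real" where "mu_alpha s = - sqrt (w2 s) / (sqrt 2 * s)"
definition mu_beta :: "real \<Rightarrow> real" where "mu_beta s = sqrt (w1 s) / (sqrt 2 * sqrt (w2 s))"

definition mu_str :: "real \<Rightarrow> nat \<Rightarrow> nat \<Rightarrow> nat \<Rightarrow> real" where
  "mu_str s A B a =
    (if a = 0 then (if A = 1 \<and> B = 3 then mu_alpha s else if A = 3 \<and> B = 1 then - mu_alpha s
                    else if A = 2 \<and> B = 3 then mu_beta s else if A = 3 \<and> B = 2 then - mu_beta s else 0)
     else (if A = 2 \<and> B = 3 then 2 * mu_beta s else if A = 3 \<and> B = 2 then - 2 * mu_beta s else 0))"

definition pot_str :: "real \<Rightarrow> real \<Rightarrow> nat \<Rightarrow> nat \<Rightarrow> real" where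
  "pot_str r0 s A B = (if A = B then (if A = 1 then 2 * s^2 * kappa_str r0 s
     else if A = 2 then -2 * (s^2+1) * kappa_str r0 s else 2 * kappa_str r0 s) else 0)"

lemma less_2_cases: "(a::nat) < 2 \<Longrightarrow> a = 0 \<or> a = 1"
  by arith

lemma frame_index_cases: "(A::nat) \<in> {1..3} \<Longrightarrow> A = 1 \<or> A = 2 \<or> A = 3"
  by auto

lemma sum_lessThan_2: "(\<Sum>a<2. f a) = f 0 + f (1::nat)"
  by (simp add: eval_nat_numeral)

lemma sum_frame_indices: "(\<Sum>a\<in>{1..3}. f a) = f 1 + f 2 + f (3::nat)"
proof -
  have "{1..3::nat} = {1,2,3}" by auto
  thus ?thesis by (simp add: add.assoc)
qed

lemma sum_frame_indices': "(\<Sum>a\<in>{Suc 0..3}. f a) = f 1 + f 2 + f (3::nat)"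
  using sum_frame_indices by simp

lemma sqrt2_mult_self: "sqrt 2 * sqrt 2 = 2" "sqrt 2 * (sqrt 2 * x) = 2 * x"
  by simp_all

locale schw_string = schw_exterior_point +
  assumes s_gt_sqrt2: "s > sqrt 2"
begin

lemma s_sq_gt_2: "s^2 > 2"
proof -
  have "(sqrt 2)^2 < s^2" using s_gt_sqrt2 by (intro power_strict_mono) auto
  thus ?thesis by simp
qed

lemma w_pos: "w1 s > 0" "w2 s > 0"
  using s_sq_gt_2 by (auto simp: w1_def w2_def)

lemma sqrt_w_simps:
  "sqrt (w1 s) * sqrt (w1 s) = w1 s" "sqrt (w2 s) * sqrt (w2 s) = w2 s"
  "sqrt (w1 s) * (sqrt (w1 s) * x) = w1 s * x" "sqrt (w2 s) * (sqrt (w2 s) * x) = w2 s * x"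
  "(sqrt (w1 s))^2 = w1 s" "(sqrt (w2 s))^2 = w2 s"
  "\<bar>w1 s\<bar> = w1 s" "\<bar>w2 s\<bar> = w2 s"
  using w_pos by auto

lemma str_nonzero: "sqrt (w1 s) \<noteq> 0" "sqrt (w2 s) \<noteq> 0" "w1 s \<noteq> 0" "w2 s \<noteq> 0" "s \<noteq> 0" "r0 \<noteq> 0"
  using w_pos s_nonzero r0_nonzero by auto

lemma g_string: "schw_g r0 (string_emb r0 s xi) a b = schw_comp r0 a b (s*r0) (pi/4)"
  by (simp add: schw_g_eq_comp string_emb_r string_emb_theta)

lemma chr_string:
  "chr (schw_g r0) (schw_gi r0) (string_emb r0 s xi) m n l = schw_chr r0 m n l (s*r0) (pi/4)"
  using chr_schw[OF r0_pos, of "string_emb r0 s xi"] outside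
  by (simp add: string_emb_r string_emb_theta)

lemma riem_string:
  "riem (schw_g r0) (schw_gi r0) (string_emb r0 s xi) m n l r = schw_riem r0 m n l r (s*r0) (pi/4)"
  using riem_schw[OF r0_pos, of "string_emb r0 s xi"] outside sin_cos_pi_4_nonzero
  by (simp add: string_emb_r string_emb_theta)

lemma indG_string: "indG (schw_g r0) (string_emb r0 s) xi a b = G_str r0 s a b"
  unfolding indG_def g_string dX_string sum_lessThan_5
  apply (cases "a = 0"; cases "a = 1"; cases "b = 0"; cases "b = 1")
  apply (simp_all add: schw_comp_def dX_str_def G_str_def sin_cos_pi_4 schw_f_str w1_def sqrt2_mult_self)
  apply (simp_all add: field_simps sqrt2_mult_self s_nonzero r0_nonzero)
  apply (simp_all add: algebra_simps eval_nat_numeral)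
  done

lemma det_G_str: "G_str r0 s 0 0 * G_str r0 s 1 1 - G_str r0 s 0 1 * G_str r0 s 1 0 = -(r0^4 * s^2 * w2 s)/4"
  by (simp add: G_str_def w2_def field_simps eval_nat_numeral)

lemma indGi_string: "indGi (schw_g r0) (string_emb r0 s) xi a b = Gi_str r0 s a b"
  unfolding indGi_def inv2_def indG_string Let_def det_G_str
  apply (cases "a = 0"; cases "a = 1"; cases "b = 0"; cases "b = 1")
  apply (simp_all add: G_str_def Gi_str_def kappa_str_def)
  apply (simp_all add: field_simps str_nonzero)
  apply ((simp_all add: algebra_simps eval_nat_numeral)?)
  done

lemma wchr_string: "wchr (schw_g r0) (string_emb r0 s) xi c a b = 0"
proof -
  have "\<And>d b a. pd (\<lambda>eta. indG (schw_g r0) (string_emb r0 s) eta d b) xi a = 0"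
    by (rule pd_eq_0I[where c = "G_str r0 s _ _"]) (simp add: indG_string)
  thus ?thesis unfolding wchr_def by simp
qed

lemma sff_string: "sff (schw_g r0) (schw_gi r0) (string_emb r0 s) xi m a b =
   (\<Sum>n<5. \<Sum>l<5. schw_chr r0 m n l (s*r0) (pi/4) * dX_str r0 s a n * dX_str r0 s b l)"
proof -
  have "pd (\<lambda>eta. dX (string_emb r0 s) eta b m) xi a = 0"
    by (rule pd_eq_0I[where c = "dX_str r0 s b m"]) (simp add: dX_string)
  thus ?thesis unfolding sff_def wchr_string dX_string chr_string by simp
qed

lemma KA_string:
  assumes "A \<in> {1..3}" "a < 2" "b < 2"
  shows "KA (schw_g r0) (schw_gi r0) (string_emb r0 s) (string_frame r0 s) xi A a b = K_str r0 s A a b"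
  using frame_index_cases[OF assms(1)] less_2_cases[OF assms(2)] less_2_cases[OF assms(3)]
  unfolding KA_def sff_string g_string string_frame_eq
  apply (elim disjE)
  apply (simp_all add: sum_lessThan_5 schw_chr_str chr_str_def dX_str_def schw_comp_def frame_str_def
      K_str_def schw_f_str)
  apply (simp_all add: field_simps str_nonzero sqrt_w_simps sqrt2_mult_self)
  apply (simp_all add: sqrt_w_simps w1_def w2_def algebra_simps eval_nat_numeral)
  done

lemma nconn_string:
  assumes "A \<in> {1..3}" "B \<in> {1..3}" "a < 2"
  shows "nconn (schw_g r0) (schw_gi r0) (string_emb r0 s) (string_frame r0 s) xi A B a = mu_str s A B a"
  using frame_index_cases[OF assms(1)] frame_index_cases[OF assms(2)] less_2_cases[OF assms(3)]
  unfolding nconn_def pd_string_frame chr_low_def g_string string_frame_eq chr_string dX_string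
  apply (elim disjE)
  apply (simp_all add: sum_lessThan_5 schw_chr_str chr_str_def dX_str_def schw_comp_def frame_str_def
      mu_str_def mu_alpha_def mu_beta_def schw_f_str sin_cos_pi_4)
  apply (simp_all add: field_simps str_nonzero sqrt_w_simps sqrt2_mult_self sin_cos_pi_4)
  apply (simp_all add: sqrt_w_simps w1_def w2_def algebra_simps eval_nat_numeral sin_cos_pi_4)
  done

lemma riem_low_string:
  assumes "p < 5" "q < 5" "r < 5" "u < 5"
  shows "riem_low (schw_g r0) (schw_gi r0) (string_emb r0 s xi) p q r u
    = schw_comp r0 p p (s*r0) (pi/4) * riem_str s r0 p q r u"
  unfolding riem_low_def g_string riem_string using less_5_cases[OF assms(1)] assms
  by (elim disjE) (simp_all add: sum_lessThan_5 schw_riem_str schw_comp_def)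

lemma ricci_string:
  assumes "p < 5" "q < 5"
  shows "ricci (schw_g r0) (schw_gi r0) (string_emb r0 s xi) p q = 0"
  unfolding ricci_def riem_string
  using less_5_cases[OF assms(1)] less_5_cases[OF assms(2)] str_nonzero
  apply (elim disjE)
  apply (simp_all add: sum_lessThan_5 schw_riem_str riem_str_def riem_sec_str_def Let_def)
  apply ((simp_all add: field_simps)?)
  done

end

lemma contract_sectional:
  fixes X :: "nat \<Rightarrow> nat \<Rightarrow> 'a::comm_ring_1"
  assumes T: "\<And>p q r u. p < n \<Longrightarrow> q < n \<Longrightarrow> r < n \<Longrightarrow> u < n \<Longrightarrow>
    T p q r u = (if p \<noteq> q \<and> r = p \<and> u = q then X p q else if p \<noteq> q \<and> r = q \<and> u = p then - X p q else 0)"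
  shows "(\<Sum>p<n. \<Sum>q<n. \<Sum>r<n. \<Sum>u<n. T p q r u * a p * c q * b r * c u)
    = (\<Sum>p<n. \<Sum>q<n. if p \<noteq> q then X p q * a p * c q * (b p * c q - b q * c p) else 0)"
proof (intro sum.cong refl)
  fix p q assume "p \<in> {..<n}" "q \<in> {..<n}"
  hence pq: "p < n" "q < n" by simp_all
  show "(\<Sum>r<n. \<Sum>u<n. T p q r u * a p * c q * b r * c u)
      = (if p \<noteq> q then X p q * a p * c q * (b p * c q - b q * c p) else 0)"
  proof (cases "p = q")
    case True
    thus ?thesis using pq by (simp add: T)
  next
    case False
    have "(\<Sum>r<n. \<Sum>u<n. T p q r u * a p * c q * b r * c u)
      = (\<Sum>r<n. \<Sum>u<n. (if u = q then (if r = p then X p q * a p * c q * b p * c q else 0) else 0)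
           - (if u = p then (if r = q then X p q * a p * c q * b q * c p else 0) else 0))"
      using pq False by (intro sum.cong refl) (auto simp: T)
    also have "\<dots> = X p q * a p * c q * (b p * c q - b q * c p)"
      using pq by (simp add: sum_subtractf algebra_simps)
    finally show ?thesis using False by simp
  qed
qed

text \<open>On the string the potential \<^const>\<open>potn\<close> is \<open>KK_str - curv_str\<close>, the \<open>K K\<close> term minus the
  Riemann term; its Ricci term vanishes because the metric is Ricci-flat.\<close>

definition KK_str :: "real \<Rightarrow> real \<Rightarrow> nat \<Rightarrow> nat \<Rightarrow> real" where
  "KK_str r0 s A B = (if A = 1 \<and> B = 1 then 2 * w1 s * w2 s / s^2 * kappa_str r0 s
     else if A = 2 \<and> B = 2 then - 2 * s^2 * kappa_str r0 s else 0)"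

definition curv_str :: "real \<Rightarrow> real \<Rightarrow> nat \<Rightarrow> nat \<Rightarrow> real" where
  "curv_str r0 s A B = (if A = B then (if A = 1 then - (6 * s^2 - 4) / s^2 * kappa_str r0 s
     else if A = 2 then 2 * kappa_str r0 s else - 2 * kappa_str r0 s) else 0)"

context schw_string
begin

lemma KK_string:
  assumes "A \<in> {1..3}" "B \<in> {1..3}"
  shows "(\<Sum>a<2. \<Sum>b<2. \<Sum>c<2. \<Sum>d<2. indGi (schw_g r0) (string_emb r0 s) xi a c * indGi (schw_g r0) (string_emb r0 s) xi b d
         * KA (schw_g r0) (schw_gi r0) (string_emb r0 s) (string_frame r0 s) xi A c d
         * KA (schw_g r0) (schw_gi r0) (string_emb r0 s) (string_frame r0 s) xi B a b) = KK_str r0 s A B"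
  using frame_index_cases[OF assms(1)] frame_index_cases[OF assms(2)]
  by (elim disjE; simp only: sum_lessThan_2 indGi_string;
      simp add: KA_string K_str_def Gi_str_def KK_str_def;
      simp add: field_simps sqrt_w_simps str_nonzero kappa_str_def;
      (simp add: w1_def w2_def algebra_simps eval_nat_numeral)?)

lemma curvature_string:
  assumes "A \<in> {1..3}" "B \<in> {1..3}"
  shows "(\<Sum>C\<in>{1..3}. \<Sum>p<5. \<Sum>q<5. \<Sum>r<5. \<Sum>u<5.
         riem_low (schw_g r0) (schw_gi r0) (string_emb r0 s xi) p q r u * string_frame r0 s xi A p
         * string_frame r0 s xi C q * string_frame r0 s xi B r * string_frame r0 s xi C u) = curv_str r0 s A B"
proof -
  have "(\<Sum>C\<in>{1..3}. \<Sum>p<5. \<Sum>q<5. \<Sum>r<5. \<Sum>u<5.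
         riem_low (schw_g r0) (schw_gi r0) (string_emb r0 s xi) p q r u * string_frame r0 s xi A p
         * string_frame r0 s xi C q * string_frame r0 s xi B r * string_frame r0 s xi C u)
    = (\<Sum>C\<in>{1..3}. \<Sum>p<5. \<Sum>q<5. if p \<noteq> q then
         schw_comp r0 p p (s*r0) (pi/4) * riem_sec_str s r0 p q * frame_str r0 s A p * frame_str r0 s C q
         * (frame_str r0 s B p * frame_str r0 s C q - frame_str r0 s B q * frame_str r0 s C p) else 0)"
    unfolding string_frame_eq
    by (intro sum.cong refl contract_sectional) (simp add: riem_low_string riem_str_def)
  also have "\<dots> = curv_str r0 s A B"
    using frame_index_cases[OF assms(1)] frame_index_cases[OF assms(2)]
    by (elim disjE; simp only: sum_lessThan_5 sum_frame_indices;
        simp add: frame_str_def schw_comp_def riem_sec_str_def Let_def curv_str_def schw_f_str sin_cos_pi_4;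
        (simp add: field_simps sqrt_w_simps str_nonzero sqrt2_mult_self kappa_str_def)?;
        (simp add: sqrt_w_simps w1_def w2_def algebra_simps eval_nat_numeral)?)
  finally show ?thesis .
qed

lemma potn_string:
  assumes "A \<in> {1..3}" "B \<in> {1..3}"
  shows "potn (schw_g r0) (schw_gi r0) (string_emb r0 s) (string_frame r0 s) xi A B = pot_str r0 s A B"
proof -
  have "potn (schw_g r0) (schw_gi r0) (string_emb r0 s) (string_frame r0 s) xi A B
      = KK_str r0 s A B - curv_str r0 s A B"
    unfolding potn_def KK_string[OF assms] curvature_string[OF assms] by (simp add: ricci_string)
  also have "\<dots> = pot_str r0 s A B"
    using frame_index_cases[OF assms(1)] frame_index_cases[OF assms(2)] str_nonzero
    by (elim disjE) (simp_all add: KK_str_def curv_str_def pot_str_def field_simps w1_def w2_def)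
  finally show ?thesis .
qed

end

section \<open>Plane waves and the dispersion relation\<close>

definition plane_wave :: "complex \<Rightarrow> int \<Rightarrow> (nat \<Rightarrow> real) \<Rightarrow> complex" where
  "plane_wave \<omega> k xi = exp (- \<i> * \<omega> * complex_of_real (xi 0) + \<i> * of_int k * complex_of_real (xi 1))"

definition wave_vec :: "complex \<Rightarrow> int \<Rightarrow> nat \<Rightarrow> complex" where
  "wave_vec \<omega> k b = (if b = 0 then - \<i> * \<omega> else if b = 1 then \<i> * of_int k else 0)"

lemma plane_wave_update:
  "plane_wave \<omega> k (xi(b := h)) = plane_wave \<omega> k xi * exp (wave_vec \<omega> k b * (of_real h - of_real (xi b)))"
  by (cases "b = 0"; cases "b = 1") (simp_all add: plane_wave_def wave_vec_def mult_exp_exp algebra_simps)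

lemma pd_plane_wave: "pd (\<lambda>eta. K * plane_wave \<omega> k eta) xi b = wave_vec \<omega> k b * K * plane_wave \<omega> k xi"
proof (rule pd_eqI)
  define g where "g z = K * plane_wave \<omega> k xi * exp (wave_vec \<omega> k b * (z - of_real (xi b)))" for z
  have "(g has_field_derivative wave_vec \<omega> k b * K * plane_wave \<omega> k xi) (at (of_real (xi b)))"
    unfolding g_def by (auto intro!: derivative_eq_intros)
  hence "((\<lambda>h. g (of_real h)) has_vector_derivative wave_vec \<omega> k b * K * plane_wave \<omega> k xi) (at (xi b))"
    by (rule has_vector_derivative_real_field)
  moreover have "(\<lambda>h. g (of_real h)) = (\<lambda>h. K * plane_wave \<omega> k (xi(b := h)))"
    by (rule ext) (simp add: g_def plane_wave_update mult.assoc)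
  ultimately show "((\<lambda>h. K * plane_wave \<omega> k (xi(b := h))) has_vector_derivative
      wave_vec \<omega> k b * K * plane_wave \<omega> k xi) (at (xi b))"
    by simp
qed

text \<open>For constant \<open>G\<^sup>a\<^sup>b\<close>, \<open>\<mu>\<^sub>A\<^sub>B\<^sub>a\<close> and potential, a plane wave \<open>c\<^sup>A e\<^sup>p\<^sup>\<cdot>\<^sup>\<xi>\<close> turns
  \<open>\<D>\<^sub>b f\<^sup>B\<close> and the linearized equation into the amplitudes below times \<open>e\<^sup>p\<^sup>\<cdot>\<^sup>\<xi>\<close>.\<close>

definition Dn_amp :: "(nat \<Rightarrow> nat \<Rightarrow> nat \<Rightarrow> complex) \<Rightarrow> (nat \<Rightarrow> complex) \<Rightarrow> (nat \<Rightarrow> complex) \<Rightarrow> nat \<Rightarrow> nat \<Rightarrow> complex" where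
  "Dn_amp mu p c b B = p b * c B - (\<Sum>A\<in>{1..3}. mu A B b * c A)"

definition lin_NG_amp :: "(nat \<Rightarrow> nat \<Rightarrow> complex) \<Rightarrow> (nat \<Rightarrow> nat \<Rightarrow> nat \<Rightarrow> complex) \<Rightarrow> (nat \<Rightarrow> nat \<Rightarrow> complex)
    \<Rightarrow> (nat \<Rightarrow> complex) \<Rightarrow> (nat \<Rightarrow> complex) \<Rightarrow> nat \<Rightarrow> complex" where
  "lin_NG_amp Gi mu pot p c B =
     (\<Sum>a<2. \<Sum>b<2. Gi a b * (p a * Dn_amp mu p c b B - (\<Sum>A\<in>{1..3}. mu A B a * Dn_amp mu p c b A)))
     + (\<Sum>A\<in>{1..3}. pot A B * c A)"

context schw_string
begin

abbreviation mu_c :: "nat \<Rightarrow> nat \<Rightarrow> nat \<Rightarrow> complex" where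
  "mu_c \<equiv> \<lambda>A B a. complex_of_real (mu_str s A B a)"

lemma Dn_plane_wave:
  assumes "B \<in> {1..3}" "b < 2"
  shows "Dn (schw_g r0) (schw_gi r0) (string_emb r0 s) (string_frame r0 s) (\<lambda>xi A. c A * plane_wave \<omega> k xi) xi b B
     = plane_wave \<omega> k xi * Dn_amp mu_c (wave_vec \<omega> k) c b B"
proof -
  have "(\<Sum>A\<in>{1..3}. complex_of_real (nconn (schw_g r0) (schw_gi r0) (string_emb r0 s) (string_frame r0 s) xi A B b)
          * (c A * plane_wave \<omega> k xi))
     = (\<Sum>A\<in>{1..3}. mu_c A B b * c A) * plane_wave \<omega> k xi"
    unfolding sum_distrib_right by (rule sum.cong) (auto simp: nconn_string[OF _ assms])
  thus ?thesis unfolding Dn_def Dn_amp_def pd_plane_wave by (simp add: algebra_simps)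
qed

lemma DDn_plane_wave:
  assumes "B \<in> {1..3}" "a < 2" "b < 2"
  shows "DDn (schw_g r0) (schw_gi r0) (string_emb r0 s) (string_frame r0 s) (\<lambda>xi A. c A * plane_wave \<omega> k xi) xi a b B
     = plane_wave \<omega> k xi * (wave_vec \<omega> k a * Dn_amp mu_c (wave_vec \<omega> k) c b B
         - (\<Sum>A\<in>{1..3}. mu_c A B a * Dn_amp mu_c (wave_vec \<omega> k) c b A))"
proof -
  have Dn: "(\<lambda>eta. Dn (schw_g r0) (schw_gi r0) (string_emb r0 s) (string_frame r0 s) (\<lambda>xi A. c A * plane_wave \<omega> k xi) eta b B)
     = (\<lambda>eta. Dn_amp mu_c (wave_vec \<omega> k) c b B * plane_wave \<omega> k eta)"
    by (rule ext) (simp add: Dn_plane_wave[OF assms(1,3)] mult.commute)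
  have nconn_Dn: "(\<Sum>A\<in>{1..3}. complex_of_real (nconn (schw_g r0) (schw_gi r0) (string_emb r0 s) (string_frame r0 s) xi A B a) *
      Dn (schw_g r0) (schw_gi r0) (string_emb r0 s) (string_frame r0 s) (\<lambda>xi A. c A * plane_wave \<omega> k xi) xi b A)
     = plane_wave \<omega> k xi * (\<Sum>A\<in>{1..3}. mu_c A B a * Dn_amp mu_c (wave_vec \<omega> k) c b A)"
    unfolding sum_distrib_left
    by (rule sum.cong) (auto simp: nconn_string[OF _ assms(1,2)] Dn_plane_wave[OF _ assms(3)])
  show ?thesis unfolding DDn_def Dn nconn_Dn pd_plane_wave wchr_string by (simp add: algebra_simps)
qed

lemma lin_NG_plane_wave:
  assumes "B \<in> {1..3}"
  shows "boxn (schw_g r0) (schw_gi r0) (string_emb r0 s) (string_frame r0 s) (\<lambda>xi A. c A * plane_wave \<omega> k xi) xi B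
     + (\<Sum>A\<in>{1..3}. complex_of_real (potn (schw_g r0) (schw_gi r0) (string_emb r0 s) (string_frame r0 s) xi A B)
         * (c A * plane_wave \<omega> k xi))
     = plane_wave \<omega> k xi * lin_NG_amp (\<lambda>a b. complex_of_real (Gi_str r0 s a b)) mu_c
         (\<lambda>A B. complex_of_real (pot_str r0 s A B)) (wave_vec \<omega> k) c B"
proof -
  have "(\<Sum>A\<in>{1..3}. complex_of_real (potn (schw_g r0) (schw_gi r0) (string_emb r0 s) (string_frame r0 s) xi A B)
          * (c A * plane_wave \<omega> k xi))
     = plane_wave \<omega> k xi * (\<Sum>A\<in>{1..3}. complex_of_real (pot_str r0 s A B) * c A)"
    unfolding sum_distrib_left by (rule sum.cong) (auto simp: potn_string[OF _ assms])
  moreover have "boxn (schw_g r0) (schw_gi r0) (string_emb r0 s) (string_frame r0 s) (\<lambda>xi A. c A * plane_wave \<omega> k xi) xi B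
     = plane_wave \<omega> k xi * (\<Sum>a<2. \<Sum>b<2. complex_of_real (Gi_str r0 s a b) *
         (wave_vec \<omega> k a * Dn_amp mu_c (wave_vec \<omega> k) c b B
          - (\<Sum>A\<in>{1..3}. mu_c A B a * Dn_amp mu_c (wave_vec \<omega> k) c b A)))"
    unfolding boxn_def indGi_string sum_distrib_left
    by (intro sum.cong refl) (simp add: DDn_plane_wave[OF assms] algebra_simps)
  ultimately show ?thesis unfolding lin_NG_amp_def by (simp add: algebra_simps)
qed

lemma lin_NG_eq_plane_waveI:
  assumes "\<And>B. B \<in> {1..3} \<Longrightarrow> lin_NG_amp (\<lambda>a b. complex_of_real (Gi_str r0 s a b)) mu_c
      (\<lambda>A B. complex_of_real (pot_str r0 s A B)) (wave_vec \<omega> k) c B = 0"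
  shows "lin_NG_eq (schw_g r0) (schw_gi r0) (string_emb r0 s) (string_frame r0 s) (\<lambda>xi A. c A * plane_wave \<omega> k xi)"
  unfolding lin_NG_eq_def using assms lin_NG_plane_wave by simp

end

text \<open>For the string, \<open>S = s\<^sup>2\<close> and \<open>disp_lam S p0 p1 = G\<^sup>a\<^sup>b p\<^sub>a p\<^sub>b / (2 kappa_str r0 s)\<close>.\<close>

definition disp_lam :: "complex \<Rightarrow> complex \<Rightarrow> complex \<Rightarrow> complex" where
  "disp_lam S p0 p1 = -2 * S * p0^2 + 2 * S * p0 * p1 - p1^2"
definition disp_u :: "complex \<Rightarrow> complex \<Rightarrow> complex \<Rightarrow> complex" where
  "disp_u S p0 p1 = -4 * S * p0 + 2 * S * p1"
definition disp_v :: "complex \<Rightarrow> complex \<Rightarrow> complex \<Rightarrow> complex" where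
  "disp_v S p0 p1 = 2 * S * p0 - 2 * p1"
definition disp_a :: "complex \<Rightarrow> complex \<Rightarrow> complex \<Rightarrow> complex" where
  "disp_a S p0 p1 = disp_lam S p0 p1 + 2 * S - 2"
definition disp_b :: "complex \<Rightarrow> complex \<Rightarrow> complex \<Rightarrow> complex" where
  "disp_b S p0 p1 = disp_lam S p0 p1 - 2 * S"

definition mode_vec :: "complex \<Rightarrow> complex \<Rightarrow> complex \<Rightarrow> complex \<Rightarrow> complex \<Rightarrow> nat \<Rightarrow> complex" where
  "mode_vec S al be p0 p1 A =
     (if A = 1 then disp_u S p0 p1 * al * disp_b S p0 p1
      else if A = 2 then (disp_u S p0 p1 + 2 * disp_v S p0 p1) * be * disp_a S p0 p1
      else if A = 3 then - (disp_a S p0 p1 * disp_b S p0 p1) else 0)"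

definition disp_poly :: "complex \<Rightarrow> complex \<Rightarrow> complex \<Rightarrow> complex \<Rightarrow> complex \<Rightarrow> complex" where
  "disp_poly S al be p0 p1 =
     (disp_u S p0 p1 * al)^2 * disp_b S p0 p1
     + ((disp_u S p0 p1 + 2 * disp_v S p0 p1) * be)^2 * disp_a S p0 p1
     + disp_lam S p0 p1 * disp_a S p0 p1 * disp_b S p0 p1"

lemmas disp_defs = disp_lam_def disp_u_def disp_v_def disp_a_def disp_b_def

lemma lin_NG_amp_mode_vec:
  fixes p0 p1 al be S K :: complex
  assumes al: "2 * S * al^2 = S - 2" and be: "2 * (S - 2) * be^2 = S - 1"
    and Gi: "Gi 0 0 = -4 * S * K" "Gi 0 1 = 2 * S * K" "Gi 1 0 = 2 * S * K" "Gi 1 1 = -2 * K"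
    and mu: "\<And>a. mu 1 1 a = 0" "\<And>a. mu 2 2 a = 0" "\<And>a. mu 3 3 a = 0" "\<And>a. mu 1 2 a = 0" "\<And>a. mu 2 1 a = 0"
      "mu 1 3 0 = al" "mu 3 1 0 = - al" "mu 2 3 0 = be" "mu 3 2 0 = - be"
      "mu 1 3 1 = 0" "mu 3 1 1 = 0" "mu 2 3 1 = 2 * be" "mu 3 2 1 = - 2 * be"
    and pot: "pot 1 1 = 2 * S * K" "pot 2 2 = -2 * (S + 1) * K" "pot 3 3 = 2 * K"
      "pot 1 2 = 0" "pot 2 1 = 0" "pot 1 3 = 0" "pot 3 1 = 0" "pot 2 3 = 0" "pot 3 2 = 0"
    and p: "p 0 = p0" "p 1 = p1"
    and disp: "disp_poly S al be p0 p1 = 0"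
    and B: "B \<in> {1..3}"
  shows "lin_NG_amp Gi mu pot p (mode_vec S al be p0 p1) B = 0"
proof -
  note facts = al be disp[unfolded disp_poly_def disp_defs]
  note simps = lin_NG_amp_def Dn_amp_def sum_lessThan_2 sum_frame_indices sum_frame_indices'
    Gi mu pot p Gi[unfolded One_nat_def] mu[unfolded One_nat_def] pot[unfolded One_nat_def]
    p[unfolded One_nat_def] mode_vec_def disp_defs
  have "lin_NG_amp Gi mu pot p (mode_vec S al be p0 p1) 1 = 0"
    using facts by (simp add: simps) algebra
  moreover have "lin_NG_amp Gi mu pot p (mode_vec S al be p0 p1) 2 = 0"
    using facts by (simp add: simps) algebra
  moreover have "lin_NG_amp Gi mu pot p (mode_vec S al be p0 p1) 3 = 0"
    using facts by (simp add: simps) algebra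
  ultimately show ?thesis using frame_index_cases[OF B] by auto
qed

context schw_string
begin

lemma mu_alpha_sq: "2 * complex_of_real (s^2) * (complex_of_real (mu_alpha s))^2 = complex_of_real (s^2) - 2"
proof -
  have "2 * s^2 * (mu_alpha s)^2 = s^2 - 2"
    using sqrt_w_simps s_nonzero by (simp add: mu_alpha_def power_divide power_mult_distrib w2_def field_simps)
  hence "complex_of_real (2 * s^2 * (mu_alpha s)^2) = complex_of_real (s^2 - 2)" by simp
  thus ?thesis by simp
qed

lemma mu_beta_sq: "2 * (complex_of_real (s^2) - 2) * (complex_of_real (mu_beta s))^2 = complex_of_real (s^2) - 1"
proof -
  have "2 * (s^2 - 2) * (mu_beta s)^2 = s^2 - 1"
    using sqrt_w_simps w_pos by (simp add: mu_beta_def power_divide power_mult_distrib w1_def w2_def field_simps)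
  hence "complex_of_real (2 * (s^2 - 2) * (mu_beta s)^2) = complex_of_real (s^2 - 1)" by simp
  thus ?thesis by simp
qed

lemma lin_NG_eq_mode_vec:
  defines "S \<equiv> complex_of_real (s^2)" and "al \<equiv> complex_of_real (mu_alpha s)"
    and "be \<equiv> complex_of_real (mu_beta s)"
  assumes p: "wave_vec \<omega> k 0 = p0" "wave_vec \<omega> k 1 = p1" and disp: "disp_poly S al be p0 p1 = 0"
  shows "lin_NG_eq (schw_g r0) (schw_gi r0) (string_emb r0 s) (string_frame r0 s)
           (\<lambda>xi A. mode_vec S al be p0 p1 A * plane_wave \<omega> k xi)"
proof (rule lin_NG_eq_plane_waveI)
  fix B :: nat assume B: "B \<in> {1..3}"
  have al: "2 * S * al^2 = S - 2"
    unfolding S_def al_def by (rule mu_alpha_sq)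
  have be: "2 * (S - 2) * be^2 = S - 1"
    unfolding S_def be_def by (rule mu_beta_sq)
  show "lin_NG_amp (\<lambda>a b. complex_of_real (Gi_str r0 s a b)) mu_c (\<lambda>A B. complex_of_real (pot_str r0 s A B))
          (wave_vec \<omega> k) (mode_vec S al be p0 p1) B = 0"
    apply (rule lin_NG_amp_mode_vec[where K = "complex_of_real (kappa_str r0 s)", OF al be])
    using p disp B by (simp_all add: Gi_str_def mu_str_def pot_str_def S_def al_def be_def)
qed

end

lemma disp_poly_k0:
  fixes S al be G :: complex
  assumes al: "2 * S * al^2 = S - 2" and G_sq: "S * G^2 = 3 - S"
  shows "disp_poly S al be G 0 = 0" and "mode_vec S al be G 0 3 = 24 * S - 48"
proof -
  show "disp_poly S al be G 0 = 0"
    unfolding disp_poly_def disp_defs using al G_sq by simp algebra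
  show "mode_vec S al be G 0 3 = 24 * S - 48"
    unfolding mode_vec_def disp_defs using G_sq by simp algebra
qed

text \<open>For \<open>k = 1\<close> and \<open>\<omega> = \<nu> - 1/2\<close>, i.e. \<open>2 p0 = \<i> - 2 \<i> \<nu>\<close>, one gets
  \<open>disp_lam = 2 S \<nu>\<^sup>2 - S/2 + 1\<close>; in terms of \<open>\<zeta> = disp_lam\<close> the dispersion relation is a cubic.\<close>

lemma disp_poly_k1:
  fixes S al be p0 \<nu> \<zeta> :: complex
  assumes al: "2 * S * al^2 = S - 2" and be: "2 * (S - 2) * be^2 = S - 1"
    and p0: "2 * p0 = \<i> - 2 * \<i> * \<nu>" and \<nu>_sq: "4 * S * \<nu>^2 = 2 * \<zeta> - 2 + S"
    and cubic: "\<zeta>^3 + (6 - 4 * S) * \<zeta>^2 + (2 * S - 12) * \<zeta> - 4 * (S - 2) = 0"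
  shows "disp_lam S p0 \<i> = \<zeta>" and "disp_poly S al be p0 \<i> = 0"
proof -
  show "disp_lam S p0 \<i> = \<zeta>"
    unfolding disp_lam_def using p0 \<nu>_sq power2_i by algebra
  show "disp_poly S al be p0 \<i> = 0"
    unfolding disp_poly_def disp_defs using al be p0 \<nu>_sq cubic power2_i by algebra
qed

lemma sqrt_upper_half_plane:
  fixes z :: complex
  assumes "Im z > 0"
  obtains \<nu> where "\<nu>^2 = z" "Im \<nu> > 0"
proof -
  define \<nu> where "\<nu> = csqrt z"
  have \<nu>_sq: "\<nu>^2 = z" unfolding \<nu>_def by simp
  have "Im \<nu> \<noteq> 0"
  proof
    assume "Im \<nu> = 0"
    hence "Im (\<nu>^2) = 0" by (simp add: power2_eq_square)
    thus False using assms \<nu>_sq by simp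
  qed
  then show ?thesis
    using that[of \<nu>] that[of "- \<nu>"] \<nu>_sq by (cases "Im \<nu> > 0") auto
qed

text \<open>Splitting off a real root \<open>\<rho>\<close> leaves the quadratic \<open>x\<^sup>2 + (\<rho> + a) x + (\<rho>\<^sup>2 + a \<rho> + b)\<close>,
  whose discriminant is the hypothesis \<open>disc\<close>.\<close>

lemma cubic_root_upper_half_plane:
  fixes a b c \<rho> :: real
  assumes root: "\<rho>^3 + a * \<rho>^2 + b * \<rho> + c = 0"
    and disc: "(\<rho> + a)^2 - 4 * (\<rho>^2 + a * \<rho> + b) < 0"
  obtains \<zeta> :: complex
  where "\<zeta>^3 + of_real a * \<zeta>^2 + of_real b * \<zeta> + of_real c = 0" "Im \<zeta> > 0"
proof -
  define t where "t = sqrt (- ((\<rho> + a)^2 - 4 * (\<rho>^2 + a * \<rho> + b)))"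
  have t_pos: "t > 0" and t_sq: "t^2 = - ((\<rho> + a)^2 - 4 * (\<rho>^2 + a * \<rho> + b))"
    unfolding t_def using disc by simp_all
  define \<zeta> where "\<zeta> = (- of_real (\<rho> + a) + \<i> * of_real t) / (2 :: complex)"
  have t_sq': "(complex_of_real t)^2 = - ((of_real \<rho> + of_real a)^2 - 4 * ((of_real \<rho>)^2 + of_real a * of_real \<rho> + of_real b))"
    using arg_cong[OF t_sq, of complex_of_real] by simp
  have root': "(complex_of_real \<rho>)^3 + of_real a * (of_real \<rho>)^2 + of_real b * of_real \<rho> + of_real c = 0"
    using arg_cong[OF root, of complex_of_real] by simp
  have two_\<zeta>: "2 * \<zeta> = - (of_real \<rho> + of_real a) + \<i> * of_real t"
    unfolding \<zeta>_def by simp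
  have "\<zeta>^3 + of_real a * \<zeta>^2 + of_real b * \<zeta> + of_real c = 0"
    using two_\<zeta> t_sq' root' power2_i by algebra
  moreover have "Im \<zeta> > 0"
    unfolding \<zeta>_def using t_pos by simp
  ultimately show ?thesis by (rule that)
qed

lemma dispersion_cubic_real_root:
  fixes S :: real
  assumes "S \<ge> 3"
  obtains \<rho> where "\<rho>^3 + (6 - 4*S) * \<rho>^2 + (2*S - 12) * \<rho> - 4*(S - 2) = 0"
proof -
  let ?f = "\<lambda>x::real. x^3 + (6 - 4*S) * x^2 + (2*S - 12) * x - 4*(S - 2)"
  have "?f (4*S) = 104 * S^2 - 52 * S + 8" by (simp add: algebra_simps eval_nat_numeral)
  moreover have "S^2 \<ge> S" using assms by (simp add: power2_eq_square)
  ultimately have "?f 0 \<le> 0" "0 \<le> ?f (4*S)" using assms by simp_all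
  moreover have "continuous_on {0..4*S} ?f" by (intro continuous_intros)
  ultimately obtain x where "?f x = 0" using IVT'[of ?f 0 0 "4*S"] assms by auto
  thus ?thesis by (rule that)
qed

text \<open>For a real root \<open>\<rho>\<close> of the cubic \<open>F\<close>, \<open>F'(\<rho>)\<^sup>2\<close> times the discriminant of the remaining
  quadratic factor is the discriminant of \<open>F\<close>, a quartic in \<open>S - 2\<close> that is negative for \<open>S \<ge> 3\<close>.\<close>

lemma dispersion_cubic_root_upper_half_plane:
  fixes S :: real
  assumes S: "S \<ge> 3"
  obtains \<zeta> :: complex
  where "\<zeta>^3 + (6 - 4 * of_real S) * \<zeta>^2 + (2 * of_real S - 12) * \<zeta> - 4 * (of_real S - 2) = 0"
    "Im \<zeta> > 0"
proof -
  obtain \<rho> where root: "\<rho>^3 + (6 - 4*S) * \<rho>^2 + (2*S - 12) * \<rho> - 4*(S - 2) = 0"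
    using dispersion_cubic_real_root[OF S] by blast
  define d where "d = (\<rho> + (6 - 4*S))^2 - 4 * (\<rho>^2 + (6 - 4*S) * \<rho> + (2*S - 12))"
  define x where "x = S - 2"
  have discriminant: "(3*\<rho>^2 + 2*(6 - 4*S)*\<rho> + (2*S - 12))^2 * d =
     2304 - 1920 * x - 2304 * x^2 - 1440 * x^3 - 960 * x^4"
    unfolding d_def x_def using root by algebra
  have "x \<ge> 1" using S unfolding x_def by simp
  hence "x^2 \<ge> 1" "x^3 \<ge> 0" "x^4 \<ge> 0"
    by simp_all
  hence "2304 - 1920 * x - 2304 * x^2 - 1440 * x^3 - 960 * x^4 < 0"
    using \<open>x \<ge> 1\<close> by linarith
  hence "d < 0"
    using discriminant by (metis not_less zero_le_mult_iff zero_le_power2)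
  then obtain \<zeta> :: complex
    where "\<zeta>^3 + of_real (6 - 4*S) * \<zeta>^2 + of_real (2*S - 12) * \<zeta> + of_real (- 4*(S - 2)) = 0"
      "Im \<zeta> > 0"
    using cubic_root_upper_half_plane[of \<rho> "6 - 4*S" "2*S - 12" "- 4*(S - 2)"] root
    unfolding d_def by auto
  thus ?thesis using that by (simp add: algebra_simps)
qed

context schw_string
begin

text \<open>For \<open>s\<^sup>2 < 3\<close> the \<open>\<sigma>\<close>-independent mode coupling the \<open>r\<close>- and \<open>t\<close>-directions grows like
  \<open>e\<^sup>\<gamma>\<^sup>\<tau>\<close> with \<open>s\<^sup>2 \<gamma>\<^sup>2 = 3 - s\<^sup>2\<close>.\<close>

lemma growing_mode_k0:
  assumes s_sq: "s^2 < 3"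
  obtains \<omega> c where "Im \<omega> > 0" "c 3 \<noteq> 0"
    "lin_NG_eq (schw_g r0) (schw_gi r0) (string_emb r0 s) (string_frame r0 s) (\<lambda>xi A. c A * plane_wave \<omega> 0 xi)"
proof -
  define S where "S = complex_of_real (s^2)"
  define al where "al = complex_of_real (mu_alpha s)"
  define be where "be = complex_of_real (mu_beta s)"
  define \<gamma> where "\<gamma> = sqrt ((3 - s^2) / s^2)"
  have \<gamma>_pos: "\<gamma> > 0" and \<gamma>_sq: "s^2 * \<gamma>^2 = 3 - s^2"
    unfolding \<gamma>_def using s_sq s_nonzero by simp_all
  define G where "G = complex_of_real \<gamma>"
  have G_sq: "S * G^2 = 3 - S"
    using arg_cong[OF \<gamma>_sq, of complex_of_real] unfolding S_def G_def by simp
  have al: "2 * S * al^2 = S - 2"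
    unfolding S_def al_def by (rule mu_alpha_sq)
  define \<omega> where "\<omega> = \<i> * G"
  have p: "wave_vec \<omega> 0 0 = G" "wave_vec \<omega> 0 1 = 0"
    unfolding wave_vec_def \<omega>_def by (simp_all add: mult.assoc[symmetric])
  have "lin_NG_eq (schw_g r0) (schw_gi r0) (string_emb r0 s) (string_frame r0 s)
      (\<lambda>xi A. mode_vec S al be G 0 A * plane_wave \<omega> 0 xi)"
    using lin_NG_eq_mode_vec[OF p] disp_poly_k0(1)[OF al G_sq] unfolding S_def al_def be_def by simp
  moreover have "mode_vec S al be G 0 3 = complex_of_real (24 * s^2 - 48)"
    using disp_poly_k0(2)[OF al G_sq] unfolding S_def by simp
  moreover have "24 * s^2 - 48 \<noteq> 0" using s_sq_gt_2 by simp
  moreover have "Im \<omega> > 0" unfolding \<omega>_def G_def using \<gamma>_pos by simp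
  ultimately show ?thesis using that by (metis of_real_eq_0_iff)
qed

lemma growing_mode_k1:
  assumes s_sq: "s^2 \<ge> 3"
  obtains \<omega> c where "Im \<omega> > 0" "c 3 \<noteq> 0"
    "lin_NG_eq (schw_g r0) (schw_gi r0) (string_emb r0 s) (string_frame r0 s) (\<lambda>xi A. c A * plane_wave \<omega> 1 xi)"
proof -
  define S where "S = complex_of_real (s^2)"
  define al where "al = complex_of_real (mu_alpha s)"
  define be where "be = complex_of_real (mu_beta s)"
  obtain \<zeta> where cubic: "\<zeta>^3 + (6 - 4 * S) * \<zeta>^2 + (2 * S - 12) * \<zeta> - 4 * (S - 2) = 0"
    and Im_\<zeta>: "Im \<zeta> > 0"
    using dispersion_cubic_root_upper_half_plane[OF s_sq] unfolding S_def by auto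
  have S_nonzero: "S \<noteq> 0" unfolding S_def using s_nonzero by simp
  have "Im ((2 * \<zeta> - 2 + S) / (4 * S)) = Im (2 * \<zeta> - 2 + S) / (4 * s^2)"
    unfolding S_def by (metis Im_divide_of_real of_real_mult of_real_numeral)
  also have "\<dots> = Im \<zeta> / (2 * s^2)"
    unfolding S_def by simp
  also have "\<dots> > 0" using Im_\<zeta> s_nonzero by simp
  finally obtain \<nu> where \<nu>_sq: "\<nu>^2 = (2 * \<zeta> - 2 + S) / (4 * S)" and Im_\<nu>: "Im \<nu> > 0"
    by (rule sqrt_upper_half_plane)
  define \<omega> where "\<omega> = \<nu> - 1/2"
  define p0 where "p0 = - \<i> * \<omega>"
  have p: "wave_vec \<omega> 1 0 = p0" "wave_vec \<omega> 1 1 = \<i>"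
    unfolding wave_vec_def p0_def by simp_all
  have \<nu>_sq': "4 * S * \<nu>^2 = 2 * \<zeta> - 2 + S" using \<nu>_sq S_nonzero by (simp add: field_simps)
  have al: "2 * S * al^2 = S - 2"
    unfolding S_def al_def by (rule mu_alpha_sq)
  have be: "2 * (S - 2) * be^2 = S - 1"
    unfolding S_def be_def by (rule mu_beta_sq)
  have "2 * p0 = \<i> - 2 * \<i> * \<nu>"
    unfolding p0_def \<omega>_def by (simp add: algebra_simps)
  note disp = disp_poly_k1[OF al be this \<nu>_sq' cubic]
  have "lin_NG_eq (schw_g r0) (schw_gi r0) (string_emb r0 s) (string_frame r0 s)
      (\<lambda>xi A. mode_vec S al be p0 \<i> A * plane_wave \<omega> 1 xi)"
    using lin_NG_eq_mode_vec[OF p] disp(2) unfolding S_def al_def be_def by simp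
  moreover have "Im (disp_a S p0 \<i>) = Im \<zeta>" "Im (disp_b S p0 \<i>) = Im \<zeta>"
    unfolding disp_a_def disp_b_def disp(1) by (simp_all add: S_def)
  hence "mode_vec S al be p0 \<i> 3 \<noteq> 0"
    using Im_\<zeta> unfolding mode_vec_def by auto
  moreover have "Im \<omega> > 0" unfolding \<omega>_def using Im_\<nu> by simp
  ultimately show ?thesis using that by blast
qed

end

theorem theorem1:
  fixes r0 s :: real
  assumes "r0 > 0" and "s > sqrt 2"
  shows "\<exists>k::int. \<exists>\<omega>::complex. Im \<omega> > 0 \<and>
           (\<exists>c::nat \<Rightarrow> complex. (\<exists>A\<in>{1..3::nat}. c A \<noteq> 0) \<and>
              lin_NG_eq (schw_g r0) (schw_gi r0) (string_emb r0 s) (string_frame r0 s)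
                (\<lambda>xi A. c A * exp (- \<i> * \<omega> * complex_of_real (xi 0)
                                    + \<i> * of_int k * complex_of_real (xi 1))))"
proof -
  have "s > 1" using assms(2) by (smt (verit) real_sqrt_gt_1_iff)
  then interpret schw_string r0 s
    using assms by unfold_locales
  obtain k \<omega> c where "Im \<omega> > 0" "c 3 \<noteq> 0"
    "lin_NG_eq (schw_g r0) (schw_gi r0) (string_emb r0 s) (string_frame r0 s) (\<lambda>xi A. c A * plane_wave \<omega> k xi)"
    using growing_mode_k0 growing_mode_k1 by (metis linorder_not_le)
  then show ?thesis
    unfolding plane_wave_def by (intro exI[of _ k] exI[of _ \<omega>] conjI bexI[of _ 3] exI[of _ c]) auto
qed

end
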